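(* Let $G$ be a stochastic game with generalized-reachability objective $\mathcal T$ of dimension $n$, let $(L_i,U_i)=\overline{\mathfrak B}^{\,i}(L_0,U_0)$ be the sequence computed by Multi-Objective Bounded Value Iteration, and let $L_\infty(s)=\bigcup_{i\ge0}L_i(s)$. Then for all states $s\in S$ and all directions $\mathbf d\in\mathsf D$, $L_\infty(s)[\mathbf d]=\mathfrak A(s)[\mathbf d]$.
   Context: Stochastic game $G=(S,S_\Box,S_\circ,s_0,A,\mathrm{Av},\delta)$: finite state set $S$ partitioned into Maximizer states $S_\Box$ and Minimizer states $S_\circ$, initial state $s_0$, finite action set $A$, nonempty $\mathrm{Av}(s)$, transition distributions $\delta(s,a)$. Strategies history-dependent randomized; $\mathbb P^{\sigma,\tau}_s$ measure on infinite paths from $s$. Objective $\mathcal T=(T_1,\dots,T_n)$; $\mathfrak A(s)$ = set of $\vec v\in\mathbb R^n_{\ge0}$ such that some Maximizer strategy $\sigma$ gives $\mathbb P^{\sigma,\tau}_s(\Diamond T_i)\ge\vec v_i$ for all Minimizer $\tau$ and all $i$. Geometry: $\mathit{dwc}(X)=\{y\in\mathbb R^n_{\ge0}\mid\exists x\in X:y\le x\}$; $\mathbf 1=\mathit{dwc}(\{\vec1\})$; scaling, Minkowski sum, $\mathrm{conv}$. Directions $[\vec v]=\{\lambda\vec v\mid\lambda>0\}$; $\mathsf D$ = directions of $\vec v\in[0,1]^n\setminus\{\vec0\}$; $X[\mathbf d]=\sup\{\|\vec x\|\mid\vec x\in X,[\vec x]=\mathbf d\}$, $\sup\emptyset=0$.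 Regions are subsets of $\mathsf D$, identified with the points whose direction lies in them. $f(s,a):=\big(\mathit{dwc}(\{\mathbb 1_{\mathcal T}(s)\})+\sum_{s'}\delta(s,a)(s')\cdot f(s')\big)\cap\mathbf 1$ with $\mathbb 1_{\mathcal T}(s)_i=1$ iff $s\in T_i$. Bellman operator: $\mathfrak B(f)(s)=\bigcap_af(s,a)$ for $s\in S_\circ$, $\mathrm{conv}(\bigcup_af(s,a))$ for $s\in S_\Box$. ECs/MECs as usual ($\mathsf{Exits}(T)$ = pairs $(s,a)$, $s\in T$, with a successor outside $T$). Best exit $\mathsf{exit}[f](T)=\big(\mathit{dwc}(\{\sum_{s\in T}\mathbb 1_{\mathcal T}(s)\})+\mathrm{conv}(\bigcup_{(s,a)\in\mathsf{Exits}(T),s\in S_\Box}f(s,a))\big)\cap\mathbf 1$, $\bigcup_\emptyset=\{\vec0\}$. $\mathsf{DEFLATE\_SECs}(G,L,U)$: states in no MEC keep $U(s)$; for each MEC $T$, compute a partition of $\mathsf D$ by common refinement over $s\in T\cap S_\circ$ of the nonempty sets $\{\mathbf d\mid B=\arg\min_{a}L(s,a)[\mathbf d]\}$, $B\subseteq\mathrm{Av}(s)$; for each region $R$ pick $\mathbf d\in R$, restrict Minimizer states in $T$ to actions minimizing $L(s,a)[\mathbf d]$, compute the MECs $\mathcal S$ of $T$ under the restriction; for $s\in T$, the new bound is the union over regions $R$ of $U(s)\cap\mathsf{exit}[U](C)\cap R$ if $s\in C\in\mathcal S$, else $U(s)\cap R$, together with $\vec0$. Multi-Objective Bounded Value Iteration: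 $L_0(s)=\{\vec0\}$, $U_0(s)=\mathit{dwc}(\{\vec1\})$; $\overline{\mathfrak B}(L,U)=(\mathfrak B(L),\mathsf{DEFLATE\_SECs}(G,\mathfrak B(L),\mathfrak B(U)))$. *)

theory Defs
  imports "HOL-Analysis.Analysis" "HOL-Probability.Probability"
begin

text \<open>
Stochastic games with finite state type 's, finite action type 'a and
objective dimension n = CARD('n) (vectors are real^'n).
A game is given by: the set Smax of Maximizer states (Minimizer states are
the complement), available actions Av, and transition distributions delta.
Histories are the lists of past (state, action) pairs; a strategy maps a
history and the current state to a distribution over actions.
\<close>

type_synonym ('s, 'a) strat = "('s \<times> 'a) list \<Rightarrow> 's \<Rightarrow> 'a pmf"

definition is_strategy :: "('s \<Rightarrow> 'a set) \<Rightarrow> 's set \<Rightarrow> ('s, 'a) strat \<Rightarrow> bool" where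
  "is_strategy Av P \<sigma> \<longleftrightarrow> (\<forall>h s. s \<in> P \<longrightarrow> set_pmf (\<sigma> h s) \<subseteq> Av s)"

text \<open>Probability of the finite prefix xs of a play (a stream of (state, action)
pairs), given past history h and current state s.\<close>
fun prefix_prob :: "'s set \<Rightarrow> ('s \<Rightarrow> 'a \<Rightarrow> 's pmf) \<Rightarrow> ('s, 'a) strat \<Rightarrow> ('s, 'a) strat
    \<Rightarrow> ('s \<times> 'a) list \<Rightarrow> 's \<Rightarrow> ('s \<times> 'a) list \<Rightarrow> real" where
  "prefix_prob Smax \<delta> \<sigma> \<tau> h s [] = 1"
| "prefix_prob Smax \<delta> \<sigma> \<tau> h s [(t, a)] =
     (if t = s then pmf (if s \<in> Smax then \<sigma> h s else \<tau> h s) a else 0)"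
| "prefix_prob Smax \<delta> \<sigma> \<tau> h s ((t, a) # (t', a') # xs) =
     (if t = s then pmf (if s \<in> Smax then \<sigma> h s else \<tau> h s) a * pmf (\<delta> s a) t'
        * prefix_prob Smax \<delta> \<sigma> \<tau> (h @ [(s, a)]) t' ((t', a') # xs) else 0)"

definition path_measure :: "'s set \<Rightarrow> ('s \<Rightarrow> 'a \<Rightarrow> 's pmf) \<Rightarrow> ('s, 'a) strat \<Rightarrow> ('s, 'a) strat
    \<Rightarrow> 's \<Rightarrow> ('s \<times> 'a) stream measure" where
  "path_measure Smax \<delta> \<sigma> \<tau> s = (THE M. prob_space M
      \<and> sets M = sets (stream_space (count_space UNIV))
      \<and> (\<forall>xs. emeasure M (sstart UNIV xs) = ennreal (prefix_prob Smax \<delta> \<sigma> \<tau> [] s xs)))"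

definition reach_prob :: "'s set \<Rightarrow> ('s \<Rightarrow> 'a \<Rightarrow> 's pmf) \<Rightarrow> ('s, 'a) strat \<Rightarrow> ('s, 'a) strat
    \<Rightarrow> 's \<Rightarrow> 's set \<Rightarrow> real" where
  "reach_prob Smax \<delta> \<sigma> \<tau> s Tgt =
     measure (path_measure Smax \<delta> \<sigma> \<tau> s) {\<omega>. \<exists>k. fst (\<omega> !! k) \<in> Tgt}"

definition achievable :: "'s set \<Rightarrow> ('s \<Rightarrow> 'a set) \<Rightarrow> ('s \<Rightarrow> 'a \<Rightarrow> 's pmf)
    \<Rightarrow> ('n::finite \<Rightarrow> 's set) \<Rightarrow> 's \<Rightarrow> (real^'n) set" where
  "achievable Smax Av \<delta> T s = {v. (\<forall>i. 0 \<le> v $ i) \<and>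
     (\<exists>\<sigma>. is_strategy Av Smax \<sigma> \<and>
        (\<forall>\<tau>. is_strategy Av (- Smax) \<tau> \<longrightarrow>
           (\<forall>i. reach_prob Smax \<delta> \<sigma> \<tau> s (T i) \<ge> v $ i)))}"

definition dwc :: "(real^'n::finite) set \<Rightarrow> (real^'n) set" where
  "dwc X = {y. (\<forall>i. 0 \<le> y $ i) \<and> (\<exists>x\<in>X. \<forall>i. y $ i \<le> x $ i)}"

definition unit_box :: "(real^'n::finite) set" where
  "unit_box = dwc {\<chi> i. 1}"

definition direction :: "real^'n::finite \<Rightarrow> (real^'n) set" where
  "direction v = {c *\<^sub>R v | c. c > 0}"

definition Dirs :: "(real^'n::finite) set set" where
  "Dirs = {direction v | v. (\<forall>i. 0 \<le> v $ i \<and> v $ i \<le> 1) \<and> v \<noteq> 0}"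

text \<open>\<open>X[d]\<close>, with sup of the empty set being 0.\<close>
definition along :: "(real^'n::finite) set \<Rightarrow> (real^'n) set \<Rightarrow> real" where
  "along X d = (let N = {norm x | x. x \<in> X \<and> direction x = d} in
                if N = {} then 0 else Sup N)"

definition indic_T :: "('n::finite \<Rightarrow> 's set) \<Rightarrow> 's \<Rightarrow> real^'n" where
  "indic_T T s = (\<chi> i. if s \<in> T i then 1 else 0)"

text \<open>\<open>f(s,a)\<close>; the Minkowski sum of the scaled sets \<open>\<delta>(s,a)(s')\<cdot>f(s')\<close>
over all (finitely many) states s' is written out elementwise.\<close>
definition f_act :: "('s::finite \<Rightarrow> 'a \<Rightarrow> 's pmf) \<Rightarrow> ('n::finite \<Rightarrow> 's set)
    \<Rightarrow> ('s \<Rightarrow> (real^'n) set) \<Rightarrow> 's \<Rightarrow> 'a \<Rightarrow> (real^'n) set" where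
  "f_act \<delta> T f s a =
     {x + y | x y. x \<in> dwc {indic_T T s} \<and>
        y \<in> {\<Sum>s'\<in>UNIV. pmf (\<delta> s a) s' *\<^sub>R g s' | g. \<forall>s'. g s' \<in> f s'}}
     \<inter> unit_box"

definition bellman :: "'s set \<Rightarrow> ('s \<Rightarrow> 'a set) \<Rightarrow> ('s::finite \<Rightarrow> 'a \<Rightarrow> 's pmf)
    \<Rightarrow> ('n::finite \<Rightarrow> 's set) \<Rightarrow> ('s \<Rightarrow> (real^'n) set) \<Rightarrow> 's \<Rightarrow> (real^'n) set" where
  "bellman Smax Av \<delta> T f s =
     (if s \<in> Smax then convex hull (\<Union>a\<in>Av s. f_act \<delta> T f s a)
      else (\<Inter>a\<in>Av s. f_act \<delta> T f s a))"

text \<open>Lower bounds of multi-objective BVI: the first component of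
\<open>\<overline>\<B>(L,U) = (\<B>(L), DEFLATE_SECs(\<dots>))\<close> is \<open>\<B>(L)\<close>, independent of U,
so \<open>L_i = \<B>^i(L_0)\<close> with \<open>L_0(s) = {0}\<close>.\<close>
definition bvi_L :: "'s set \<Rightarrow> ('s \<Rightarrow> 'a set) \<Rightarrow> ('s::finite \<Rightarrow> 'a \<Rightarrow> 's pmf)
    \<Rightarrow> ('n::finite \<Rightarrow> 's set) \<Rightarrow> nat \<Rightarrow> 's \<Rightarrow> (real^'n) set" where
  "bvi_L Smax Av \<delta> T i = (bellman Smax Av \<delta> T ^^ i) (\<lambda>s. {0})"

definition L_inf :: "'s set \<Rightarrow> ('s \<Rightarrow> 'a set) \<Rightarrow> ('s::finite \<Rightarrow> 'a \<Rightarrow> 's pmf)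
    \<Rightarrow> ('n::finite \<Rightarrow> 's set) \<Rightarrow> 's \<Rightarrow> (real^'n) set" where
  "L_inf Smax Av \<delta> T s = (\<Union>i. bvi_L Smax Av \<delta> T i s)"

end

theory Submission
  imports Defs
begin

(* Soundness: a point of L_(j+1)(s) is a one-step mixture of points of the sets f(s,a); the Maximizer
   realises it by playing the mixture's weights at s and then, after each move (s, a) to t, a strategy
   that guarantees the chosen point of L_j(t). By induction every point of L_j(s) is guaranteed within
   j steps, hence L_inf(s) is contained in the achievable set A(s).

   Completeness: fix x in A(s), achieved by sigma, and 0 < c < 1. If sigma did not guarantee c x_i within
   some finite horizon against every pure Minimizer strategy, Koenig's lemma would turn the failing
   strategies into one pure strategy keeping the reachability probability of T_i at most c x_i < x_i.
   A vector below the optimal k-step values of the Minimizer against sigma lies in L_(k+1)(s), since these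
   values satisfy the Bellman inequalities. So c x lies in L_inf(s), and the suprema along every direction
   agree.

   The measure on plays is realised as the image of an i.i.d. sequence of random "move tables": each
   table samples a move independently for every possible history, and the play reads off the entry at
   its actual history. *)

section \<open>Plays as functions of independent move tables\<close>

definition act_pmf :: "'s set \<Rightarrow> ('s, 'a) strat \<Rightarrow> ('s, 'a) strat \<Rightarrow> ('s \<times> 'a) list \<Rightarrow> 's \<Rightarrow> 'a pmf" where
  "act_pmf Smax \<sigma> \<tau> h s = (if s \<in> Smax then \<sigma> h s else \<tau> h s)"

definition step_pmf :: "'s set \<Rightarrow> ('s \<Rightarrow> 'a \<Rightarrow> 's pmf) \<Rightarrow> ('s, 'a) strat \<Rightarrow> ('s, 'a) strat
    \<Rightarrow> ('s \<times> 'a) list \<Rightarrow> 's \<Rightarrow> ('a \<times> 's) pmf" where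
  "step_pmf Smax \<delta> \<sigma> \<tau> h s = bind_pmf (act_pmf Smax \<sigma> \<tau> h s) (\<lambda>a. map_pmf (Pair a) (\<delta> s a))"

definition move_tables :: "'s set \<Rightarrow> ('s \<Rightarrow> 'a \<Rightarrow> 's pmf) \<Rightarrow> ('s, 'a) strat \<Rightarrow> ('s, 'a) strat
    \<Rightarrow> (('s \<times> 'a) list \<times> 's \<Rightarrow> 'a \<times> 's) measure" where
  "move_tables Smax \<delta> \<sigma> \<tau> = PiM UNIV (\<lambda>(h, s). measure_pmf (step_pmf Smax \<delta> \<sigma> \<tau> h s))"

primcorec play :: "('s \<times> 'a) list \<Rightarrow> 's \<Rightarrow> (('s \<times> 'a) list \<times> 's \<Rightarrow> 'a \<times> 's) stream \<Rightarrow> ('s \<times> 'a) stream" where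
  "play h s \<omega> = (s, fst (shd \<omega> (h, s))) ## play (h @ [(s, fst (shd \<omega> (h, s)))]) (snd (shd \<omega> (h, s))) (stl \<omega>)"

lemma play_Stream:
  "play h s (r ## \<omega>) = (s, fst (r (h, s))) ## play (h @ [(s, fst (r (h, s)))]) (snd (r (h, s))) \<omega>"
  by (subst play.code) simp

fun reach_prob_upto :: "'s set \<Rightarrow> ('s \<Rightarrow> 'a \<Rightarrow> 's pmf) \<Rightarrow> ('s, 'a) strat \<Rightarrow> ('s, 'a) strat
    \<Rightarrow> ('s \<times> 'a) list \<Rightarrow> 's \<Rightarrow> nat \<Rightarrow> 's set \<Rightarrow> real" where
  "reach_prob_upto Smax \<delta> \<sigma> \<tau> h s 0 Tg = (if s \<in> Tg then 1 else 0)"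
| "reach_prob_upto Smax \<delta> \<sigma> \<tau> h s (Suc k) Tg = (if s \<in> Tg then 1 else
     (\<Sum>a\<in>UNIV. pmf (act_pmf Smax \<sigma> \<tau> h s) a
        * (\<Sum>t\<in>UNIV. pmf (\<delta> s a) t * reach_prob_upto Smax \<delta> \<sigma> \<tau> (h @ [(s, a)]) t k Tg)))"

lemma reach_prob_upto_nonneg: "0 \<le> reach_prob_upto Smax \<delta> \<sigma> \<tau> h s k Tg"
  by (induction k arbitrary: h s) (auto intro!: sum_nonneg mult_nonneg_nonneg)

definition reach_within :: "nat \<Rightarrow> 's set \<Rightarrow> ('s \<times> 'a) stream set" where
  "reach_within k Tg = {x. \<exists>j\<le>k. fst (x !! j) \<in> Tg}"

lemma sets_reach_within: "reach_within k Tg \<in> sets (stream_space (count_space UNIV))"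
proof -
  have "reach_within k Tg
      = (\<Union>j\<le>k. (\<lambda>x. x !! j) -` (Tg \<times> UNIV) \<inter> space (stream_space (count_space UNIV)))"
    by (auto simp: reach_within_def space_stream_space mem_Times_iff)
  also have "\<dots> \<in> sets (stream_space (count_space UNIV))"
    by (intro sets.finite_UN finite_atMost ballI measurable_sets[OF measurable_snth]) auto
  finally show ?thesis .
qed

lemma UN_reach_within: "(\<Union>k. reach_within k Tg) = {x. \<exists>j. fst (x !! j) \<in> Tg}"
  by (auto simp: reach_within_def)

lemma sets_reach: "{x. \<exists>j. fst (x !! j) \<in> Tg} \<in> sets (stream_space (count_space UNIV))"
  unfolding UN_reach_within[symmetric] by (intro sets.countable_UN) (auto simp: sets_reach_within)

lemma prefix_prob_Cons_other: "t \<noteq> s \<Longrightarrow> prefix_prob Smax \<delta> \<sigma> \<tau> h s ((t, a) # xs) = 0"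
  by (cases xs) auto

lemma prefix_prob_Cons:
  fixes \<delta> :: "'s::finite \<Rightarrow> 'a \<Rightarrow> 's pmf"
  shows "prefix_prob Smax \<delta> \<sigma> \<tau> h s ((t, a) # xs) = (if t = s then pmf (act_pmf Smax \<sigma> \<tau> h s) a
    * (\<Sum>t'\<in>UNIV. pmf (\<delta> s a) t' * prefix_prob Smax \<delta> \<sigma> \<tau> (h @ [(s, a)]) t' xs) else 0)"
proof (cases xs)
  case Nil
  then show ?thesis by (simp add: act_pmf_def sum_pmf_eq_1)
next
  case (Cons y ys)
  obtain t1 a1 where y: "y = (t1, a1)" by fastforce
  have "(\<Sum>t'\<in>UNIV. pmf (\<delta> s a) t' * prefix_prob Smax \<delta> \<sigma> \<tau> (h @ [(s, a)]) t' xs)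
      = pmf (\<delta> s a) t1 * prefix_prob Smax \<delta> \<sigma> \<tau> (h @ [(s, a)]) t1 xs"
    by (subst sum.remove[of _ t1]) (auto simp: Cons y prefix_prob_Cons_other simp del: prefix_prob.simps)
  then show ?thesis by (simp add: Cons y act_pmf_def)
qed

lemma prefix_prob_nonneg: "0 \<le> prefix_prob Smax \<delta> \<sigma> \<tau> h s xs"
  by (induction Smax \<delta> \<sigma> \<tau> h s xs rule: prefix_prob.induct) auto

lemma nn_integral_pmf_finite:
  fixes p :: "'x::finite pmf"
  shows "(\<integral>\<^sup>+x. f x \<partial>p) = (\<Sum>x\<in>UNIV. ennreal (pmf p x) * f x)"
  by (simp add: nn_integral_measure_pmf nn_integral_count_space_finite)

lemma nn_integral_step_pmf:
  fixes \<delta> :: "'s \<Rightarrow> 'a::finite \<Rightarrow> 's::finite pmf"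
  assumes "\<And>a t. 0 \<le> F a t"
  shows "(\<integral>\<^sup>+(a, t). ennreal (F a t) \<partial>step_pmf Smax \<delta> \<sigma> \<tau> h s)
    = ennreal (\<Sum>a\<in>UNIV. pmf (act_pmf Smax \<sigma> \<tau> h s) a * (\<Sum>t\<in>UNIV. pmf (\<delta> s a) t * F a t))"
proof -
  have "(\<integral>\<^sup>+(a, t). ennreal (F a t) \<partial>step_pmf Smax \<delta> \<sigma> \<tau> h s)
      = (\<integral>\<^sup>+a. \<integral>\<^sup>+t. ennreal (F a t) \<partial>\<delta> s a \<partial>act_pmf Smax \<sigma> \<tau> h s)"
    by (simp add: step_pmf_def)
  also have "\<dots> = (\<Sum>a\<in>UNIV. ennreal (pmf (act_pmf Smax \<sigma> \<tau> h s) a)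
      * (\<Sum>t\<in>UNIV. ennreal (pmf (\<delta> s a) t) * ennreal (F a t)))"
    by (simp only: nn_integral_pmf_finite)
  also have "\<dots> = ennreal (\<Sum>a\<in>UNIV. pmf (act_pmf Smax \<sigma> \<tau> h s) a * (\<Sum>t\<in>UNIV. pmf (\<delta> s a) t * F a t))"
    by (simp add: assms sum_nonneg flip: ennreal_mult'')
  finally show ?thesis .
qed

lemma prob_space_move_tables: "prob_space (move_tables Smax \<delta> \<sigma> \<tau>)"
  unfolding move_tables_def by (intro prob_space_PiM) (auto intro: prob_space_measure_pmf)

lemma nn_integral_move_tables:
  "(\<integral>\<^sup>+\<omega>. f (\<omega> (h, s)) \<partial>move_tables Smax \<delta> \<sigma> \<tau>) = (\<integral>\<^sup>+x. f x \<partial>step_pmf Smax \<delta> \<sigma> \<tau> h s)"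
proof -
  let ?M = "\<lambda>(h, s). measure_pmf (step_pmf Smax \<delta> \<sigma> \<tau> h s)"
  have "distr (move_tables Smax \<delta> \<sigma> \<tau>) (?M (h, s)) (\<lambda>\<omega>. \<omega> (h, s)) = ?M (h, s)"
    unfolding move_tables_def by (rule distr_PiM_component) (auto intro: prob_space_measure_pmf)
  then have "(\<integral>\<^sup>+x. f x \<partial>step_pmf Smax \<delta> \<sigma> \<tau> h s)
      = (\<integral>\<^sup>+x. f x \<partial>distr (move_tables Smax \<delta> \<sigma> \<tau>) (?M (h, s)) (\<lambda>\<omega>. \<omega> (h, s)))"
    by simp
  also have "\<dots> = (\<integral>\<^sup>+\<omega>. f (\<omega> (h, s)) \<partial>move_tables Smax \<delta> \<sigma> \<tau>)"
    unfolding move_tables_def by (rule nn_integral_distr[OF measurable_component_singleton]) auto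
  finally show ?thesis ..
qed

context
  fixes Smax :: "'s::finite set" and \<delta> :: "'s \<Rightarrow> 'a::finite \<Rightarrow> 's pmf" and \<sigma> \<tau> :: "('s, 'a) strat"
begin

abbreviation \<Omega> :: "(('s \<times> 'a) list \<times> 's \<Rightarrow> 'a \<times> 's) stream measure" where
  "\<Omega> \<equiv> stream_space (move_tables Smax \<delta> \<sigma> \<tau>)"

lemma prob_space_\<Omega>: "prob_space \<Omega>"
  by (rule prob_space.prob_space_stream_space[OF prob_space_move_tables])

lemma measurable_shd_entry: "(\<lambda>\<omega>. shd \<omega> i) \<in> \<Omega> \<rightarrow>\<^sub>M count_space UNIV"
proof -
  obtain h s where i: "i = (h, s)" by fastforce
  have "(\<lambda>f. f i) \<in> move_tables Smax \<delta> \<sigma> \<tau> \<rightarrow>\<^sub>M count_space UNIV"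
    using measurable_component_singleton[of i UNIV "\<lambda>(h, s). measure_pmf (step_pmf Smax \<delta> \<sigma> \<tau> h s)"]
    unfolding move_tables_def i by (simp add: measurable_cong_sets[OF refl sets_measure_pmf_count_space])
  then show ?thesis by measurable
qed

lemma measurable_entry:
  fixes C :: "'x \<Rightarrow> ('s \<times> 'a) list \<times> 's" and g :: "_ \<Rightarrow> 'a \<times> 's \<Rightarrow> 'c"
  assumes "C \<in> N \<rightarrow>\<^sub>M count_space UNIV" "R \<in> N \<rightarrow>\<^sub>M \<Omega>"
  shows "(\<lambda>x. g (C x) (shd (R x) (C x))) \<in> N \<rightarrow>\<^sub>M count_space UNIV"
proof (rule measurable_compose_countable[where f = "\<lambda>i x. g i (shd (R x) i)", OF _ assms(1)])
  show "(\<lambda>x. g i (shd (R x) i)) \<in> N \<rightarrow>\<^sub>M count_space UNIV" for i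
    using measurable_compose[OF assms(2) measurable_shd_entry] by simp
qed

lemma measurable_play: "play h s \<in> \<Omega> \<rightarrow>\<^sub>M stream_space (count_space UNIV)"
proof -
  define F where "F f \<longleftrightarrow> (\<exists>C R. C \<in> \<Omega> \<rightarrow>\<^sub>M count_space UNIV \<and> R \<in> \<Omega> \<rightarrow>\<^sub>M \<Omega>
      \<and> f = (\<lambda>x. play (fst (C x)) (snd (C x)) (R x)))" for f :: "_ \<Rightarrow> ('s \<times> 'a) stream"
  have "F (play h s)"
    unfolding F_def by (intro exI[of _ "\<lambda>_. (h, s)"] exI[of _ "\<lambda>x. x"]) auto
  then show ?thesis
  proof (rule measurable_stream_coinduct[where F = F])
    fix f assume "F f"
    then obtain C R where CR: "C \<in> \<Omega> \<rightarrow>\<^sub>M count_space UNIV" "R \<in> \<Omega> \<rightarrow>\<^sub>M \<Omega>"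
      and f: "f = (\<lambda>x. play (fst (C x)) (snd (C x)) (R x))" unfolding F_def by blast
    show "(\<lambda>x. shd (f x)) \<in> \<Omega> \<rightarrow>\<^sub>M count_space UNIV"
      unfolding f by (simp add: measurable_entry[OF CR, of "\<lambda>c m. (snd c, fst m)"])
  next
    fix f assume "F f"
    then obtain C R where CR: "C \<in> \<Omega> \<rightarrow>\<^sub>M count_space UNIV" "R \<in> \<Omega> \<rightarrow>\<^sub>M \<Omega>"
      and f: "f = (\<lambda>x. play (fst (C x)) (snd (C x)) (R x))" unfolding F_def by blast
    define C' where "C' x = (fst (C x) @ [(snd (C x), fst (shd (R x) (C x)))], snd (shd (R x) (C x)))" for x
    have "C' \<in> \<Omega> \<rightarrow>\<^sub>M count_space UNIV"
      unfolding C'_def by (rule measurable_entry[OF CR, of "\<lambda>c m. (fst c @ [(snd c, fst m)], snd m)"])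
    moreover have "(\<lambda>x. stl (f x)) = (\<lambda>x. play (fst (C' x)) (snd (C' x)) (stl (R x)))"
      unfolding f C'_def by (rule ext) (simp add: case_prod_beta)
    moreover have "(\<lambda>x. stl (R x)) \<in> \<Omega> \<rightarrow>\<^sub>M \<Omega>"
      using measurable_compose[OF CR(2) measurable_stl] by simp
    ultimately show "F (\<lambda>x. stl (f x))" unfolding F_def by blast
  qed
qed

lemma emeasure_play_step:
  assumes X: "X \<in> sets (stream_space (count_space UNIV))"
  shows "emeasure \<Omega> {\<omega> \<in> space \<Omega>. play h s \<omega> \<in> X}
    = (\<integral>\<^sup>+(a, t). emeasure \<Omega> {\<omega> \<in> space \<Omega>. play (h @ [(s, a)]) t \<omega> \<in> {x. (s, a) ## x \<in> X}}
        \<partial>step_pmf Smax \<delta> \<sigma> \<tau> h s)"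
proof -
  interpret M: prob_space "move_tables Smax \<delta> \<sigma> \<tau>" by (rule prob_space_move_tables)
  let ?G = "\<lambda>(a, t). emeasure \<Omega> {\<omega> \<in> space \<Omega>. play (h @ [(s, a)]) t \<omega> \<in> {x. (s, a) ## x \<in> X}}"
  have "{\<omega> \<in> space \<Omega>. play h s \<omega> \<in> X} = play h s -` X \<inter> space \<Omega>" by blast
  also have "\<dots> \<in> sets \<Omega>" using measurable_play X by (rule measurable_sets)
  finally have "emeasure \<Omega> {\<omega> \<in> space \<Omega>. play h s \<omega> \<in> X}
      = (\<integral>\<^sup>+r. emeasure \<Omega> {x \<in> space \<Omega>. r ## x \<in> {\<omega> \<in> space \<Omega>. play h s \<omega> \<in> X}} \<partial>move_tables Smax \<delta> \<sigma> \<tau>)"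
    by (rule M.emeasure_stream_space)
  also have "\<dots> = (\<integral>\<^sup>+r. ?G (r (h, s)) \<partial>move_tables Smax \<delta> \<sigma> \<tau>)"
    by (intro nn_integral_cong arg_cong2[where f = emeasure] refl)
      (auto simp: space_stream_space streams_Stream play_Stream case_prod_beta)
  also have "\<dots> = (\<integral>\<^sup>+x. ?G x \<partial>step_pmf Smax \<delta> \<sigma> \<tau> h s)"
    by (rule nn_integral_move_tables)
  finally show ?thesis .
qed

lemma emeasure_play_sstart:
  "emeasure \<Omega> {\<omega> \<in> space \<Omega>. play h s \<omega> \<in> sstart UNIV xs} = ennreal (prefix_prob Smax \<delta> \<sigma> \<tau> h s xs)"
proof (induction xs arbitrary: h s)
  case Nil
  then show ?case using prob_space.emeasure_space_1[OF prob_space_\<Omega>] by simp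
next
  case (Cons x xs)
  obtain t a where x: "x = (t, a)" by fastforce
  let ?F = "\<lambda>a' t'. if s = t \<and> a' = a then prefix_prob Smax \<delta> \<sigma> \<tau> (h @ [(s, a)]) t' xs else 0"
  have "emeasure \<Omega> {\<omega> \<in> space \<Omega>. play h s \<omega> \<in> sstart UNIV (x # xs)}
      = (\<integral>\<^sup>+(a', t'). ennreal (?F a' t') \<partial>step_pmf Smax \<delta> \<sigma> \<tau> h s)"
    unfolding emeasure_play_step[OF sets_sstart] x
    by (intro nn_integral_cong) (auto simp: Cons.IH)
  also have "\<dots> = ennreal (\<Sum>a'\<in>UNIV. pmf (act_pmf Smax \<sigma> \<tau> h s) a'
      * (if s = t \<and> a' = a then \<Sum>t'\<in>UNIV. pmf (\<delta> s a) t' * prefix_prob Smax \<delta> \<sigma> \<tau> (h @ [(s, a)]) t' xs else 0))"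
  proof -
    have "(\<Sum>t'\<in>UNIV. pmf (\<delta> s a') t' * ?F a' t') = (if s = t \<and> a' = a
        then \<Sum>t'\<in>UNIV. pmf (\<delta> s a) t' * prefix_prob Smax \<delta> \<sigma> \<tau> (h @ [(s, a)]) t' xs else 0)" for a'
      by auto
    then show ?thesis by (subst nn_integral_step_pmf) (auto simp: prefix_prob_nonneg)
  qed
  also have "\<dots> = ennreal (prefix_prob Smax \<delta> \<sigma> \<tau> h s (x # xs))"
    unfolding x prefix_prob_Cons by (simp add: if_distrib[of "(*) _"] cong: if_cong)
  finally show ?case .
qed

lemma path_measure_eq_distr_play:
  "path_measure Smax \<delta> \<sigma> \<tau> s = distr \<Omega> (stream_space (count_space UNIV)) (play [] s)"
proof -
  let ?Q = "\<lambda>M. prob_space M \<and> sets M = sets (stream_space (count_space UNIV))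
    \<and> (\<forall>xs. emeasure M (sstart UNIV xs) = ennreal (prefix_prob Smax \<delta> \<sigma> \<tau> [] s xs))"
  let ?D = "distr \<Omega> (stream_space (count_space UNIV)) (play [] s)"
  have "emeasure ?D (sstart UNIV xs) = ennreal (prefix_prob Smax \<delta> \<sigma> \<tau> [] s xs)" for xs
  proof -
    have "play [] s -` sstart UNIV xs \<inter> space \<Omega> = {\<omega> \<in> space \<Omega>. play [] s \<omega> \<in> sstart UNIV xs}"
      by blast
    then show ?thesis
      by (simp add: emeasure_distr[OF measurable_play sets_sstart] emeasure_play_sstart)
  qed
  then have D: "?Q ?D"
    using prob_space.prob_space_distr[OF prob_space_\<Omega> measurable_play] by simp
  moreover have "M = ?D" if "?Q M" for M
    by (rule stream_space_eq_sstart[of UNIV]) (use that D in auto)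
  ultimately show ?thesis unfolding path_measure_def by (rule the_equality)
qed

lemma emeasure_play_reach_within:
  "emeasure \<Omega> {\<omega> \<in> space \<Omega>. play h s \<omega> \<in> reach_within k Tg}
    = ennreal (reach_prob_upto Smax \<delta> \<sigma> \<tau> h s k Tg)"
proof (induction k arbitrary: h s)
  case 0
  have "{\<omega> \<in> space \<Omega>. play h s \<omega> \<in> reach_within 0 Tg} = (if s \<in> Tg then space \<Omega> else {})"
    by (simp add: reach_within_def)
  then show ?case by (simp add: prob_space.emeasure_space_1[OF prob_space_\<Omega>])
next
  case (Suc k)
  show ?case
  proof (cases "s \<in> Tg")
    case True
    have "fst (play h s \<omega> !! 0) \<in> Tg" for \<omega> using True by simp
    then have "{\<omega> \<in> space \<Omega>. play h s \<omega> \<in> reach_within (Suc k) Tg} = space \<Omega>"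
      unfolding reach_within_def using le0 by blast
    then show ?thesis using True by (simp add: prob_space.emeasure_space_1[OF prob_space_\<Omega>])
  next
    case False
    then have shift: "{x. (s, a) ## x \<in> reach_within (Suc k) Tg} = reach_within k Tg" for a
      unfolding reach_within_def by (auto simp flip: less_Suc_eq_le simp: Ex_less_Suc2)
    have "emeasure \<Omega> {\<omega> \<in> space \<Omega>. play h s \<omega> \<in> reach_within (Suc k) Tg}
        = (\<integral>\<^sup>+(a, t). ennreal (reach_prob_upto Smax \<delta> \<sigma> \<tau> (h @ [(s, a)]) t k Tg) \<partial>step_pmf Smax \<delta> \<sigma> \<tau> h s)"
      by (subst emeasure_play_step[OF sets_reach_within]) (simp only: shift Suc.IH)
    then show ?thesis
      using False by (simp add: nn_integral_step_pmf reach_prob_upto_nonneg)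
  qed
qed

lemma reach_prob_upto_tendsto:
  "(\<lambda>k. reach_prob_upto Smax \<delta> \<sigma> \<tau> [] s k Tg) \<longlonglongrightarrow> reach_prob Smax \<delta> \<sigma> \<tau> s Tg"
proof -
  let ?A = "\<lambda>k. {\<omega> \<in> space \<Omega>. play [] s \<omega> \<in> reach_within k Tg}"
  have "?A k \<in> sets \<Omega>" for k
    by (rule measurable_sets_Collect[OF measurable_play]) (simp add: space_stream_space sets_reach_within)
  moreover have "incseq ?A"
    by (intro monoI) (auto simp: reach_within_def intro: order_trans)
  ultimately have "(\<lambda>k. measure \<Omega> (?A k)) \<longlonglongrightarrow> measure \<Omega> (\<Union>k. ?A k)"
    by (intro finite_measure.finite_Lim_measure_incseq[OF prob_space.finite_measure[OF prob_space_\<Omega>]]) auto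
  moreover have "measure \<Omega> (?A k) = reach_prob_upto Smax \<delta> \<sigma> \<tau> [] s k Tg" for k
    using emeasure_play_reach_within[of "[]" s k Tg] by (simp add: measure_def reach_prob_upto_nonneg)
  moreover have "(\<Union>k. ?A k) = play [] s -` {x. \<exists>j. fst (x !! j) \<in> Tg} \<inter> space \<Omega>"
    by (auto simp: reach_within_def)
  moreover have "reach_prob Smax \<delta> \<sigma> \<tau> s Tg
      = measure \<Omega> (play [] s -` {x. \<exists>j. fst (x !! j) \<in> Tg} \<inter> space \<Omega>)"
    unfolding reach_prob_def path_measure_eq_distr_play by (rule measure_distr[OF measurable_play sets_reach])
  ultimately show ?thesis by simp
qed

end

lemma reach_prob_upto_le_1:
  fixes \<delta> :: "'s \<Rightarrow> 'a::finite \<Rightarrow> 's::finite pmf"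
  shows "reach_prob_upto Smax \<delta> \<sigma> \<tau> h s k Tg \<le> 1"
proof (induction k arbitrary: h s)
  case (Suc k)
  have "(\<Sum>a\<in>UNIV. pmf (act_pmf Smax \<sigma> \<tau> h s) a
      * (\<Sum>t\<in>UNIV. pmf (\<delta> s a) t * reach_prob_upto Smax \<delta> \<sigma> \<tau> (h @ [(s, a)]) t k Tg))
    \<le> (\<Sum>a\<in>UNIV. pmf (act_pmf Smax \<sigma> \<tau> h s) a * (\<Sum>t\<in>UNIV. pmf (\<delta> s a) t * 1))"
    using Suc.IH by (intro sum_mono mult_left_mono) auto
  then show ?case by (simp add: sum_pmf_eq_1)
qed simp

lemma reach_prob_upto_Suc_ge:
  "reach_prob_upto Smax \<delta> \<sigma> \<tau> h s k Tg \<le> reach_prob_upto Smax \<delta> \<sigma> \<tau> h s (Suc k) Tg"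
proof (induction k arbitrary: h s)
  case 0
  show ?case by (auto intro!: sum_nonneg mult_nonneg_nonneg reach_prob_upto_nonneg)
next
  case (Suc k)
  then show ?case by (auto intro!: sum_mono mult_left_mono)
qed

lemma reach_prob_upto_mono:
  "k \<le> m \<Longrightarrow> reach_prob_upto Smax \<delta> \<sigma> \<tau> h s k Tg \<le> reach_prob_upto Smax \<delta> \<sigma> \<tau> h s m Tg"
  by (induction m rule: dec_induct) (simp, metis order_trans reach_prob_upto_Suc_ge)

lemma reach_prob_upto_le_reach_prob:
  fixes \<delta> :: "'s \<Rightarrow> 'a::finite \<Rightarrow> 's::finite pmf"
  shows "reach_prob_upto Smax \<delta> \<sigma> \<tau> [] s k Tg \<le> reach_prob Smax \<delta> \<sigma> \<tau> s Tg"
  by (rule incseq_le[OF _ reach_prob_upto_tendsto]) (simp add: incseq_def reach_prob_upto_mono)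

lemma reach_prob_le_1:
  fixes \<delta> :: "'s \<Rightarrow> 'a::finite \<Rightarrow> 's::finite pmf"
  shows "reach_prob Smax \<delta> \<sigma> \<tau> s Tg \<le> 1"
  using reach_prob_upto_tendsto by (rule LIMSEQ_le_const2) (simp add: reach_prob_upto_le_1)

definition first_state :: "('s \<times> 'a) list \<Rightarrow> 's \<Rightarrow> 's" where
  "first_state r t = (case r of [] \<Rightarrow> t | p # _ \<Rightarrow> fst p)"

lemma first_state_simps [simp]: "first_state [] t = t" "first_state (p # r) t = fst p"
  by (simp_all add: first_state_def)

lemma reach_prob_upto_cong:
  assumes "\<And>r t. length r \<le> k \<Longrightarrow> first_state r t = s
    \<Longrightarrow> act_pmf Smax \<sigma> \<tau> (h @ r) t = act_pmf Smax \<sigma>' \<tau>' (h @ r) t"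
  shows "reach_prob_upto Smax \<delta> \<sigma> \<tau> h s k Tg = reach_prob_upto Smax \<delta> \<sigma>' \<tau>' h s k Tg"
  using assms
proof (induction k arbitrary: h s)
  case (Suc k)
  have "reach_prob_upto Smax \<delta> \<sigma> \<tau> (h @ [(s, a)]) t k Tg = reach_prob_upto Smax \<delta> \<sigma>' \<tau>' (h @ [(s, a)]) t k Tg"
    for a t
    by (rule Suc.IH) (use Suc.prems[of "(s, a) # _"] in auto)
  moreover have "act_pmf Smax \<sigma> \<tau> h s = act_pmf Smax \<sigma>' \<tau>' h s" using Suc.prems[of "[]" s] by simp
  ultimately show ?case by simp
qed simp

definition pure_strat :: "(('s \<times> 'a) list \<Rightarrow> 's \<Rightarrow> 'a) \<Rightarrow> ('s, 'a) strat" where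
  "pure_strat \<pi> h s = return_pmf (\<pi> h s)"

lemma is_strategy_pure_strat [simp]:
  "is_strategy Av P (pure_strat \<pi>) \<longleftrightarrow> (\<forall>h s. s \<in> P \<longrightarrow> \<pi> h s \<in> Av s)"
  by (simp add: is_strategy_def pure_strat_def)

definition some_action :: "('s \<Rightarrow> 'a set) \<Rightarrow> ('s \<times> 'a) list \<Rightarrow> 's \<Rightarrow> 'a" where
  "some_action Av h s = (SOME a. a \<in> Av s)"

lemma some_action_mem: "Av s \<noteq> {} \<Longrightarrow> some_action Av h s \<in> Av s"
  by (simp add: some_action_def some_in_eq)

text \<open>Play b at (h, s); once the first move (s, a) has led to state t, continue as F a t;
  everywhere else play as d.\<close>
definition graft :: "('s \<times> 'a) list \<Rightarrow> 's \<Rightarrow> 'b \<Rightarrow> ('a \<Rightarrow> 's \<Rightarrow> ('s \<times> 'a) list \<Rightarrow> 's \<Rightarrow> 'b)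
    \<Rightarrow> (('s \<times> 'a) list \<Rightarrow> 's \<Rightarrow> 'b) \<Rightarrow> ('s \<times> 'a) list \<Rightarrow> 's \<Rightarrow> 'b" where
  "graft h s b F d h' t = (if h' = h \<and> t = s then b
     else if length h < length h' \<and> take (length h) h' = h
       then F (snd (h' ! length h)) (first_state (drop (Suc (length h)) h') t) h' t
     else d h' t)"

lemma graft_here [simp]: "graft h s b F d h s = b"
  by (simp add: graft_def)

lemma graft_after [simp]: "graft h s b F d (h @ (s, a) # r) t = F a (first_state r t) (h @ (s, a) # r) t"
  by (simp add: graft_def nth_append)

lemma is_strategy_graft:
  assumes "\<And>a t. is_strategy Av P (F a t)" "is_strategy Av P d" "s \<in> P \<Longrightarrow> set_pmf b \<subseteq> Av s"
  shows "is_strategy Av P (graft h s b F d)"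
  using assms unfolding is_strategy_def graft_def by auto

lemma pure_strat_graft:
  "pure_strat (graft h s b F d) = graft h s (return_pmf b) (\<lambda>a t. pure_strat (F a t)) (pure_strat d)"
  by (intro ext) (simp add: pure_strat_def graft_def)

lemma reach_prob_upto_graft_max:
  "reach_prob_upto Smax \<delta> (graft h s b F d) \<tau> (h @ [(s, a)]) t k Tg
    = reach_prob_upto Smax \<delta> (F a t) \<tau> (h @ [(s, a)]) t k Tg"
  by (rule reach_prob_upto_cong) (simp add: act_pmf_def)

lemma reach_prob_upto_graft_min:
  "reach_prob_upto Smax \<delta> \<sigma> (graft h s b F d) (h @ [(s, a)]) t k Tg
    = reach_prob_upto Smax \<delta> \<sigma> (F a t) (h @ [(s, a)]) t k Tg"
  by (rule reach_prob_upto_cong) (simp add: act_pmf_def)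

section \<open>Convex lower sets and the Bellman operator\<close>

definition pmf_mean :: "'x pmf \<Rightarrow> ('x \<Rightarrow> real^'n::finite) \<Rightarrow> real^'n" where
  "pmf_mean p g = (\<Sum>x\<in>UNIV. pmf p x *\<^sub>R g x)"

lemma pmf_mean_component: "pmf_mean p g $ i = (\<Sum>x\<in>UNIV. pmf p x * g x $ i)"
  by (simp add: pmf_mean_def)

lemma pmf_mean_mem_unit_interval:
  fixes p :: "'x::finite pmf"
  assumes "\<And>x. g x \<in> {0..1}"
  shows "pmf_mean p g \<in> {0..1}"
proof -
  have g: "0 \<le> g x $ i" "g x $ i \<le> 1" for x i using assms[of x] by (simp_all add: less_eq_vec_def)
  have "0 \<le> pmf_mean p g $ i" for i
    unfolding pmf_mean_component by (intro sum_nonneg mult_nonneg_nonneg g(1) pmf_nonneg)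
  moreover have "pmf_mean p g $ i \<le> (\<Sum>x\<in>UNIV. pmf p x * 1)" for i
    unfolding pmf_mean_component by (intro sum_mono mult_left_mono g(2) pmf_nonneg)
  ultimately show ?thesis by (simp add: less_eq_vec_def sum_pmf_eq_1)
qed

definition convex_lower_set :: "(real^'n::finite) set \<Rightarrow> bool" where
  "convex_lower_set X \<longleftrightarrow> 0 \<in> X \<and> convex X \<and> X \<subseteq> {0..1} \<and> (\<forall>u\<in>X. {0..u} \<subseteq> X)"

lemma dwc_singleton: "dwc {x} = {0..x}"
  by (auto simp: dwc_def less_eq_vec_def)

lemma unit_box_eq: "unit_box = {0..1}"
  by (simp add: unit_box_def dwc_singleton one_vec_def)

lemma convex_unit_interval: "convex {0..1 :: real^'n::finite}"
  by (simp add: interval_cbox_cart convex_box)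

lemma mem_interval_0_imp_mult:
  fixes y u :: "real^'n::finite"
  assumes "y \<in> {0..u}"
  shows "\<exists>r\<in>{0..1}. y = r * u"
proof
  define r :: "real^'n" where "r = (\<chi> i. if u $ i = 0 then 0 else y $ i / u $ i)"
  have yu: "0 \<le> y $ i \<and> y $ i \<le> u $ i" for i
    using assms by (auto simp: less_eq_vec_def)
  have "0 \<le> r $ i \<and> r $ i \<le> 1 \<and> y $ i = r $ i * u $ i" for i
    using yu[of i] by (auto simp: r_def divide_le_eq_1)
  then show "r \<in> {0..1}" "y = r * u"
    by (auto simp: less_eq_vec_def vec_eq_iff)
qed

lemma mult_mem_interval_0:
  fixes r u :: "real^'n::finite"
  shows "r \<in> {0..1} \<Longrightarrow> 0 \<le> u \<Longrightarrow> r * u \<in> {0..u}"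
  by (auto simp: less_eq_vec_def intro: mult_left_le_one_le)

lemma linear_vector_mult: "linear (\<lambda>x :: real^'n::finite. r * x)"
  by (rule linearI) (simp_all add: vec_eq_iff algebra_simps)

lemma mem_f_act_iff:
  fixes \<delta> :: "'s::finite \<Rightarrow> 'a \<Rightarrow> 's pmf" and L :: "'s \<Rightarrow> (real^'n::finite) set"
  assumes nonneg: "\<And>t. \<forall>u\<in>L t. 0 \<le> u"
  shows "v \<in> f_act \<delta> T L s a \<longleftrightarrow> v \<in> {0..1} \<and> (\<exists>g. (\<forall>t. g t \<in> L t) \<and>
    (\<forall>i. if s \<in> T i then pmf_mean (\<delta> s a) g $ i \<le> v $ i else v $ i = pmf_mean (\<delta> s a) g $ i))"
  (is "_ \<longleftrightarrow> _ \<and> (\<exists>g. ?G g \<and> ?E g)")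
proof -
  have "v \<in> f_act \<delta> T L s a
      \<longleftrightarrow> v \<in> {0..1} \<and> (\<exists>g. ?G g \<and> (\<exists>x\<in>{0..indic_T T s}. v = x + pmf_mean (\<delta> s a) g))"
    unfolding f_act_def dwc_singleton unit_box_eq pmf_mean_def by blast
  also have "\<dots> \<longleftrightarrow> v \<in> {0..1} \<and> (\<exists>g. ?G g \<and> v - pmf_mean (\<delta> s a) g \<in> {0..indic_T T s})"
    by (metis add_diff_cancel diff_add_cancel)
  moreover have "v - pmf_mean (\<delta> s a) g \<in> {0..indic_T T s} \<longleftrightarrow> ?E g" if "v \<in> {0..1}" "?G g" for g
  proof -
    have "0 \<le> g t $ i" for t i
      using nonneg that(2) by (auto simp: less_eq_vec_def)
    then have m: "0 \<le> pmf_mean (\<delta> s a) g $ i" for i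
      by (auto simp: pmf_mean_component intro!: sum_nonneg)
    have v: "v $ i \<le> 1" for i
      using that(1) by (simp add: less_eq_vec_def)
    have "(0 \<le> v $ i - pmf_mean (\<delta> s a) g $ i \<and> v $ i - pmf_mean (\<delta> s a) g $ i \<le> indic_T T s $ i)
        \<longleftrightarrow> (if s \<in> T i then pmf_mean (\<delta> s a) g $ i \<le> v $ i else v $ i = pmf_mean (\<delta> s a) g $ i)" for i
      using m[of i] v[of i] by (auto simp: indic_T_def)
    then show ?thesis by (simp add: less_eq_vec_def flip: all_conj_distrib)
  qed
  ultimately show ?thesis by blast
qed

lemma convex_f_act:
  fixes \<delta> :: "'s::finite \<Rightarrow> 'a \<Rightarrow> 's pmf" and L :: "'s \<Rightarrow> (real^'n::finite) set"
  assumes L: "\<And>t. convex_lower_set (L t)"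
  shows "convex (f_act \<delta> T L s a)"
proof (rule convexI)
  have "\<forall>u\<in>L t. 0 \<le> u" for t using L[of t] unfolding convex_lower_set_def by auto
  note iff = mem_f_act_iff[of L, OF this]
  let ?m = "\<lambda>g. pmf_mean (\<delta> s a) g"
  fix v w :: "real^'n" and c d :: real
  assume v: "v \<in> f_act \<delta> T L s a" and w: "w \<in> f_act \<delta> T L s a" and cd: "0 \<le> c" "0 \<le> d" "c + d = 1"
  obtain g where g: "\<forall>t. g t \<in> L t" "\<forall>i. if s \<in> T i then ?m g $ i \<le> v $ i else v $ i = ?m g $ i"
    using v unfolding iff by blast
  obtain g' where g': "\<forall>t. g' t \<in> L t" "\<forall>i. if s \<in> T i then ?m g' $ i \<le> w $ i else w $ i = ?m g' $ i"
    using w unfolding iff by blast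
  have "c *\<^sub>R g t + d *\<^sub>R g' t \<in> L t" for t
    using L g(1) g'(1) cd by (auto simp: convex_lower_set_def intro: convexD)
  moreover have mean: "?m (\<lambda>t. c *\<^sub>R g t + d *\<^sub>R g' t) $ i = c * ?m g $ i + d * ?m g' $ i" for i
    by (simp add: pmf_mean_component algebra_simps sum.distrib sum_distrib_left)
  moreover have "c *\<^sub>R v + d *\<^sub>R w \<in> {0..1}"
    using v w cd convexD[OF convex_unit_interval] unfolding iff by blast
  moreover have "if s \<in> T i then ?m (\<lambda>t. c *\<^sub>R g t + d *\<^sub>R g' t) $ i \<le> (c *\<^sub>R v + d *\<^sub>R w) $ i
      else (c *\<^sub>R v + d *\<^sub>R w) $ i = ?m (\<lambda>t. c *\<^sub>R g t + d *\<^sub>R g' t) $ i" for i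
    using g(2)[rule_format, of i] g'(2)[rule_format, of i] cd
    by (auto simp: mean intro!: add_mono mult_left_mono)
  ultimately show "c *\<^sub>R v + d *\<^sub>R w \<in> f_act \<delta> T L s a"
    unfolding iff by (intro conjI exI[of _ "\<lambda>t. c *\<^sub>R g t + d *\<^sub>R g' t"] allI) blast+
qed

lemma f_act_lower_closed:
  fixes \<delta> :: "'s::finite \<Rightarrow> 'a \<Rightarrow> 's pmf" and L :: "'s \<Rightarrow> (real^'n::finite) set"
  assumes L: "\<And>t. convex_lower_set (L t)" and v: "v \<in> f_act \<delta> T L s a"
  shows "{0..v} \<subseteq> f_act \<delta> T L s a"
proof
  have nonneg: "\<forall>u\<in>L t. 0 \<le> u" for t using L[of t] unfolding convex_lower_set_def by auto
  note iff = mem_f_act_iff[of L, OF nonneg]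
  let ?m = "\<lambda>g. pmf_mean (\<delta> s a) g"
  fix y assume y: "y \<in> {0..v}"
  obtain g where g: "\<forall>t. g t \<in> L t" "\<forall>i. if s \<in> T i then ?m g $ i \<le> v $ i else v $ i = ?m g $ i"
    and v01: "v \<in> {0..1}" using v unfolding iff by blast
  obtain r where r: "r \<in> {0..1}" "y = r * v" using mem_interval_0_imp_mult[OF y] by blast
  have "r * g t \<in> L t" for t
  proof -
    have "0 \<le> g t" using nonneg g(1) by blast
    then have "r * g t \<in> {0..g t}" by (rule mult_mem_interval_0[OF r(1)])
    then show ?thesis using L[of t] g(1) unfolding convex_lower_set_def by blast
  qed
  moreover have mean: "?m (\<lambda>t. r * g t) $ i = r $ i * ?m g $ i" for i
    by (simp add: pmf_mean_component sum_distrib_left algebra_simps)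
  moreover have "if s \<in> T i then ?m (\<lambda>t. r * g t) $ i \<le> y $ i else y $ i = ?m (\<lambda>t. r * g t) $ i" for i
  proof -
    have "0 \<le> r $ i" using r(1) by (simp add: less_eq_vec_def)
    then show ?thesis using g(2)[rule_format, of i] by (auto simp: mean r(2) intro!: mult_left_mono)
  qed
  moreover have "y \<in> {0..1}" using y v01 by auto
  ultimately show "y \<in> f_act \<delta> T L s a"
    unfolding iff by (intro conjI exI[of _ "\<lambda>t. r * g t"] allI) blast+
qed

lemma convex_lower_set_f_act:
  fixes \<delta> :: "'s::finite \<Rightarrow> 'a \<Rightarrow> 's pmf" and L :: "'s \<Rightarrow> (real^'n::finite) set"
  assumes L: "\<And>t. convex_lower_set (L t)"
  shows "convex_lower_set (f_act \<delta> T L s a)"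
proof -
  have "\<forall>u\<in>L t. 0 \<le> u" for t using L[of t] unfolding convex_lower_set_def by auto
  note iff = mem_f_act_iff[of L, OF this]
  have "0 \<in> f_act \<delta> T L s a"
  proof (subst iff, intro conjI exI[of _ "\<lambda>_. 0"])
    show "\<forall>t. (0 :: real^'n) \<in> L t" using L unfolding convex_lower_set_def by blast
  qed (auto simp: pmf_mean_def less_eq_vec_def)
  moreover have "f_act \<delta> T L s a \<subseteq> {0..1}" by (simp add: subset_iff iff)
  moreover have "convex (f_act \<delta> T L s a)" by (rule convex_f_act[OF L])
  moreover have "{0..v} \<subseteq> f_act \<delta> T L s a" if "v \<in> f_act \<delta> T L s a" for v
    using that by (rule f_act_lower_closed[where L = L, OF L])
  ultimately show ?thesis unfolding convex_lower_set_def by blast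
qed

lemma convex_hull_lower_closed:
  fixes U :: "(real^'n::finite) set"
  assumes U: "\<And>x. x \<in> U \<Longrightarrow> 0 \<le> x \<and> {0..x} \<subseteq> U" and u: "u \<in> convex hull U"
  shows "{0..u} \<subseteq> convex hull U"
proof
  fix y assume "y \<in> {0..u}"
  then obtain r where r: "r \<in> {0..1}" "y = r * u" using mem_interval_0_imp_mult by blast
  have "(\<lambda>x. r * x) ` U \<subseteq> U"
    using U mult_mem_interval_0[OF r(1)] by blast
  then have "convex hull ((\<lambda>x. r * x) ` U) \<subseteq> convex hull U" by (rule hull_mono)
  then show "y \<in> convex hull U"
    using u r(2) convex_hull_linear_image[OF linear_vector_mult, of r U] by blast
qed

lemma convex_lower_set_bellman:
  fixes \<delta> :: "'s::finite \<Rightarrow> 'a \<Rightarrow> 's pmf" and L :: "'s \<Rightarrow> (real^'n::finite) set"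
  assumes L: "\<And>t. convex_lower_set (L t)" and Av: "Av s \<noteq> {}"
  shows "convex_lower_set (bellman Smax Av \<delta> T L s)"
proof -
  have F: "convex_lower_set (f_act \<delta> T L s a)" for a by (intro convex_lower_set_f_act L)
  show ?thesis
  proof (cases "s \<in> Smax")
    case True
    let ?U = "\<Union>a\<in>Av s. f_act \<delta> T L s a"
    have U01: "?U \<subseteq> {0..1}" using F by (auto simp: convex_lower_set_def)
    have U: "0 \<le> x \<and> {0..x} \<subseteq> ?U" if x: "x \<in> ?U" for x
    proof -
      obtain a where a: "a \<in> Av s" "x \<in> f_act \<delta> T L s a" using x by blast
      then have "{0..x} \<subseteq> f_act \<delta> T L s a" using F[of a] unfolding convex_lower_set_def by blast
      then show ?thesis using a(1) U01 x by auto
    qed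
    have "0 \<in> ?U" using F Av unfolding convex_lower_set_def by blast
    then have "0 \<in> convex hull ?U" by (rule hull_inc)
    moreover have "convex hull ?U \<subseteq> {0..1}" using U01 convex_unit_interval by (rule hull_minimal)
    ultimately show ?thesis
      using True convex_hull_lower_closed[OF U] by (simp add: bellman_def convex_lower_set_def)
  next
    case False
    let ?I = "\<Inter>a\<in>Av s. f_act \<delta> T L s a"
    have "0 \<in> ?I" "?I \<subseteq> {0..1}" "\<forall>u\<in>?I. {0..u} \<subseteq> ?I"
      using F Av unfolding convex_lower_set_def by blast+
    moreover have "convex ?I" using F unfolding convex_lower_set_def by (blast intro: convex_INT)
    ultimately show ?thesis using False by (simp add: bellman_def convex_lower_set_def)
  qed
qed

lemma convex_lower_set_bvi_L:
  fixes \<delta> :: "'s::finite \<Rightarrow> 'a \<Rightarrow> 's pmf" and T :: "'n::finite \<Rightarrow> 's set"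
  assumes "\<And>s. Av s \<noteq> {}"
  shows "convex_lower_set (bvi_L Smax Av \<delta> T j s)"
proof (induction j arbitrary: s)
  case 0
  show ?case by (simp add: bvi_L_def convex_lower_set_def less_eq_vec_def)
next
  case (Suc j)
  then show ?case by (simp add: bvi_L_def convex_lower_set_bellman assms)
qed

lemma pmf_eq_0_outside: "set_pmf p \<subseteq> A \<Longrightarrow> a \<notin> A \<Longrightarrow> pmf p a = 0"
  by (auto simp: set_pmf_eq)

lemma convex_hull_f_act:
  fixes \<delta> :: "'s::finite \<Rightarrow> 'a::finite \<Rightarrow> 's pmf" and L :: "'s \<Rightarrow> (real^'n::finite) set"
  assumes L: "\<And>t. convex_lower_set (L t)"
  shows "convex hull (\<Union>a\<in>Av s. f_act \<delta> T L s a) = {\<Sum>a\<in>Av s. c a *\<^sub>R z a | c z.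
      (\<forall>a\<in>Av s. 0 \<le> c a) \<and> sum c (Av s) = 1 \<and> (\<forall>a\<in>Av s. z a \<in> f_act \<delta> T L s a)}"
proof (rule convex_hull_finite_union)
  show "\<forall>a\<in>Av s. convex (f_act \<delta> T L s a) \<and> f_act \<delta> T L s a \<noteq> {}"
  proof
    fix a
    have "convex_lower_set (f_act \<delta> T L s a)" by (rule convex_lower_set_f_act[OF L])
    then show "convex (f_act \<delta> T L s a) \<and> f_act \<delta> T L s a \<noteq> {}" unfolding convex_lower_set_def by blast
  qed
qed simp

lemma bellman_decompose:
  fixes \<delta> :: "'s::finite \<Rightarrow> 'a::finite \<Rightarrow> 's pmf" and L :: "'s \<Rightarrow> (real^'n::finite) set"
  assumes L: "\<And>t. convex_lower_set (L t)" and Av: "Av s \<noteq> {}" and v: "v \<in> bellman Smax Av \<delta> T L s"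
  obtains p w where "set_pmf p \<subseteq> Av s" "\<forall>a\<in>Av s. w a \<in> f_act \<delta> T L s a"
    "\<And>q. set_pmf q \<subseteq> Av s \<Longrightarrow> v \<le> (\<Sum>a\<in>UNIV. pmf (if s \<in> Smax then p else q) a *\<^sub>R w a)"
proof (cases "s \<in> Smax")
  case True
  then obtain c z where v_eq: "v = (\<Sum>a\<in>Av s. c a *\<^sub>R z a)" and c: "\<forall>a\<in>Av s. 0 \<le> c a" "sum c (Av s) = 1"
    and z: "\<forall>a\<in>Av s. z a \<in> f_act \<delta> T L s a"
    using v unfolding bellman_def convex_hull_f_act[where L = L, OF L] by auto
  define p where "p = embed_pmf (\<lambda>a. if a \<in> Av s then c a else 0)"
  have pmf_p: "pmf p a = (if a \<in> Av s then c a else 0)" for a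
    unfolding p_def using c
    by (intro pmf_embed_pmf) (auto simp: nn_integral_count_space_finite sum.If_cases)
  then have "set_pmf p \<subseteq> Av s" by (auto simp: set_pmf_iff split: if_splits)
  moreover have "v = (\<Sum>a\<in>UNIV. pmf p a *\<^sub>R z a)"
    unfolding v_eq pmf_p by (simp add: if_distrib[of "\<lambda>x. x *\<^sub>R _"] sum.If_cases)
  ultimately show ?thesis using True z v_eq by (intro that[of p z]) auto
next
  case False
  obtain a0 where "a0 \<in> Av s" using Av by blast
  moreover have "(\<Sum>a\<in>UNIV. pmf q a *\<^sub>R v) = v" for q :: "'a pmf"
    by (simp flip: scaleR_sum_left add: sum_pmf_eq_1)
  ultimately show ?thesis using v False by (intro that[of "return_pmf a0" "\<lambda>_. v"]) (auto simp: bellman_def)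
qed

lemma f_act_successors:
  fixes \<delta> :: "'s::finite \<Rightarrow> 'a \<Rightarrow> 's pmf" and L :: "'s \<Rightarrow> (real^'n::finite) set"
  assumes L: "\<And>t. convex_lower_set (L t)" and w: "\<forall>a\<in>Av s. w a \<in> f_act \<delta> T L s a"
  obtains g where "\<And>a t. g a t \<in> L t"
    "\<And>a i. a \<in> Av s \<Longrightarrow> s \<notin> T i \<Longrightarrow> w a $ i = pmf_mean (\<delta> s a) (g a) $ i"
proof -
  have nonneg: "\<forall>u\<in>L t. 0 \<le> u" for t using L[of t] unfolding convex_lower_set_def by auto
  have "\<forall>a. \<exists>g. (\<forall>t. g t \<in> L t) \<and> (a \<in> Av s \<longrightarrow> (\<forall>i. s \<notin> T i \<longrightarrow> w a $ i = pmf_mean (\<delta> s a) g $ i))"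
  proof
    fix a
    show "\<exists>g. (\<forall>t. g t \<in> L t) \<and> (a \<in> Av s \<longrightarrow> (\<forall>i. s \<notin> T i \<longrightarrow> w a $ i = pmf_mean (\<delta> s a) g $ i))"
    proof (cases "a \<in> Av s")
      case True
      then obtain g where "\<forall>t. g t \<in> L t"
        "\<forall>i. if s \<in> T i then pmf_mean (\<delta> s a) g $ i \<le> w a $ i else w a $ i = pmf_mean (\<delta> s a) g $ i"
        using w unfolding mem_f_act_iff[of L, OF nonneg] by blast
      then show ?thesis by (intro exI[of _ g]) auto
    next
      case False
      then show ?thesis using L unfolding convex_lower_set_def by (intro exI[of _ "\<lambda>_. 0"]) blast
    qed
  qed
  from choice[OF this] obtain g where
    "\<forall>a. (\<forall>t. g a t \<in> L t) \<and> (a \<in> Av s \<longrightarrow> (\<forall>i. s \<notin> T i \<longrightarrow> w a $ i = pmf_mean (\<delta> s a) (g a) $ i))"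
    by blast
  then show ?thesis using that by blast
qed

lemma bellman_le_mean:
  fixes \<delta> :: "'s::finite \<Rightarrow> 'a::finite \<Rightarrow> 's pmf" and L :: "'s \<Rightarrow> (real^'n::finite) set"
  assumes L: "\<And>t. convex_lower_set (L t)" and Av: "Av s \<noteq> {}" and v: "v \<in> bellman Smax Av \<delta> T L s"
  obtains p W where "set_pmf p \<subseteq> Av s" "\<And>a t. W a t \<in> L t"
    "\<And>q i. set_pmf q \<subseteq> Av s \<Longrightarrow> s \<notin> T i
      \<Longrightarrow> v $ i \<le> (\<Sum>a\<in>UNIV. pmf (if s \<in> Smax then p else q) a * pmf_mean (\<delta> s a) (W a) $ i)"
proof -
  obtain p w where p: "set_pmf p \<subseteq> Av s" and w: "\<forall>a\<in>Av s. w a \<in> f_act \<delta> T L s a"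
    and le: "\<And>q. set_pmf q \<subseteq> Av s \<Longrightarrow> v \<le> (\<Sum>a\<in>UNIV. pmf (if s \<in> Smax then p else q) a *\<^sub>R w a)"
    using bellman_decompose[where L = L, OF L Av v] by blast
  obtain W where W: "\<And>a t. W a t \<in> L t"
    and wW: "\<And>a i. a \<in> Av s \<Longrightarrow> s \<notin> T i \<Longrightarrow> w a $ i = pmf_mean (\<delta> s a) (W a) $ i"
    by (rule f_act_successors[where L = L and Av = Av and s = s and w = w, OF L w]) blast
  have "v $ i \<le> (\<Sum>a\<in>UNIV. pmf (if s \<in> Smax then p else q) a * pmf_mean (\<delta> s a) (W a) $ i)"
    if q: "set_pmf q \<subseteq> Av s" and i: "s \<notin> T i" for q i
  proof -
    let ?q = "if s \<in> Smax then p else q"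
    have q': "set_pmf ?q \<subseteq> Av s" using p q by simp
    have "v $ i \<le> (\<Sum>a\<in>UNIV. pmf ?q a * w a $ i)" using le[OF q] by (simp add: less_eq_vec_def)
    also have "\<dots> = (\<Sum>a\<in>UNIV. pmf ?q a * pmf_mean (\<delta> s a) (W a) $ i)"
    proof (rule sum.cong[OF refl])
      fix a
      show "pmf ?q a * w a $ i = pmf ?q a * pmf_mean (\<delta> s a) (W a) $ i"
        using wW[of a i] i pmf_eq_0_outside[OF q', of a] by (cases "a \<in> Av s") auto
    qed
    finally show ?thesis .
  qed
  then show ?thesis using that p W by blast
qed

lemma mem_bellman_if_le:
  fixes \<delta> :: "'s::finite \<Rightarrow> 'a::finite \<Rightarrow> 's pmf" and L :: "'s \<Rightarrow> (real^'n::finite) set"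
  assumes L: "\<And>t. convex_lower_set (L t)" and Av: "Av s \<noteq> {}"
    and p: "set_pmf p \<subseteq> Av s" and w: "\<forall>a\<in>Av s. w a \<in> f_act \<delta> T L s a" and v0: "0 \<le> v"
    and le: "\<And>q. set_pmf q \<subseteq> Av s \<Longrightarrow> v \<le> (\<Sum>a\<in>UNIV. pmf (if s \<in> Smax then p else q) a *\<^sub>R w a)"
  shows "v \<in> bellman Smax Av \<delta> T L s"
proof (cases "s \<in> Smax")
  case True
  have B: "convex_lower_set (bellman Smax Av \<delta> T L s)" by (intro convex_lower_set_bellman L Av)
  have "(\<Sum>a\<in>UNIV. pmf p a *\<^sub>R w a) = (\<Sum>a\<in>Av s. pmf p a *\<^sub>R w a)"
    using p by (intro sum.mono_neutral_right) (auto simp: pmf_eq_0_outside)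
  also have "\<dots> \<in> bellman Smax Av \<delta> T L s"
    unfolding bellman_def convex_hull_f_act[where L = L, OF L] using True w p by (auto intro!: exI[of _ "pmf p"] sum_pmf_eq_1)
  finally have u: "(\<Sum>a\<in>UNIV. pmf p a *\<^sub>R w a) \<in> bellman Smax Av \<delta> T L s" .
  have "v \<in> {0..(\<Sum>a\<in>UNIV. pmf p a *\<^sub>R w a)}"
    using le[OF p] v0 True by simp
  then show ?thesis using u B unfolding convex_lower_set_def by blast
next
  case False
  have "v \<in> f_act \<delta> T L s a" if a: "a \<in> Av s" for a
  proof -
    have "v \<in> {0..w a}" using le[of "return_pmf a"] a False v0 by simp
    then show ?thesis using w a convex_lower_set_f_act[where L = L and \<delta> = \<delta> and T = T and s = s and a = a, OF L] unfolding convex_lower_set_def by blast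
  qed
  then show ?thesis using False by (simp add: bellman_def)
qed

lemma mem_bellman_if_le_mean:
  fixes \<delta> :: "'s::finite \<Rightarrow> 'a::finite \<Rightarrow> 's pmf" and L :: "'s \<Rightarrow> (real^'n::finite) set"
  assumes L: "\<And>t. convex_lower_set (L t)" and Av: "Av s \<noteq> {}"
    and p: "s \<in> Smax \<Longrightarrow> set_pmf p \<subseteq> Av s" and W: "\<And>a t. W a t \<in> L t" and y: "y \<in> {0..1}"
    and le: "\<And>q i. set_pmf q \<subseteq> Av s \<Longrightarrow> s \<notin> T i
      \<Longrightarrow> y $ i \<le> (\<Sum>a\<in>UNIV. pmf (if s \<in> Smax then p else q) a * pmf_mean (\<delta> s a) (W a) $ i)"
  shows "y \<in> bellman Smax Av \<delta> T L s"
proof -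
  have nonneg: "\<forall>u\<in>L t. 0 \<le> u" and L01: "L t \<subseteq> {0..1}" for t
    using L[of t] unfolding convex_lower_set_def by auto
  define z where "z a = (\<chi> i. if s \<in> T i then 1 else pmf_mean (\<delta> s a) (W a) $ i)" for a
  have "z a \<in> f_act \<delta> T L s a" for a
  proof -
    have mean01: "pmf_mean (\<delta> s a) (W a) \<in> {0..1}" using W L01 by (intro pmf_mean_mem_unit_interval) blast
    then have "z a \<in> {0..1}" by (simp add: z_def less_eq_vec_def)
    moreover have "pmf_mean (\<delta> s a) (W a) $ i \<le> 1" for i using mean01 by (simp add: less_eq_vec_def)
    ultimately show ?thesis
      unfolding mem_f_act_iff[of L, OF nonneg] using W by (intro conjI exI[of _ "W a"]) (auto simp: z_def)
  qed
  moreover have "y \<le> (\<Sum>a\<in>UNIV. pmf (if s \<in> Smax then p else q) a *\<^sub>R z a)" if q: "set_pmf q \<subseteq> Av s" for q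
  proof -
    have "y $ i \<le> (\<Sum>a\<in>UNIV. pmf (if s \<in> Smax then p else q) a * z a $ i)" for i
    proof (cases "s \<in> T i")
      case True
      then show ?thesis using y by (simp add: z_def less_eq_vec_def sum_pmf_eq_1)
    next
      case False
      then show ?thesis using le[OF q False] by (simp add: z_def)
    qed
    then show ?thesis by (simp add: less_eq_vec_def)
  qed
  moreover obtain a0 where "a0 \<in> Av s" using Av by blast
  then have "set_pmf (if s \<in> Smax then p else return_pmf a0) \<subseteq> Av s" using p by auto
  ultimately show ?thesis using y
    by (intro mem_bellman_if_le[where L = L and p = "if s \<in> Smax then p else return_pmf a0" and w = z] L Av) auto
qed

section \<open>Soundness of the lower bounds\<close>

lemma reach_prob_upto_graft_ge:
  fixes \<delta> :: "'s \<Rightarrow> 'a::finite \<Rightarrow> 's::finite pmf"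
  assumes "s \<notin> Tg" and "\<And>a t. u a t \<le> reach_prob_upto Smax \<delta> (F a t) \<tau> (h @ [(s, a)]) t j Tg"
  shows "(\<Sum>a\<in>UNIV. pmf (act_pmf Smax (graft h s p F d) \<tau> h s) a * (\<Sum>t\<in>UNIV. pmf (\<delta> s a) t * u a t))
    \<le> reach_prob_upto Smax \<delta> (graft h s p F d) \<tau> h s (Suc j) Tg"
  using assms by (auto simp: reach_prob_upto_graft_max intro!: sum_mono mult_left_mono)

lemma bvi_L_guaranteed:
  fixes \<delta> :: "'s::finite \<Rightarrow> 'a::finite \<Rightarrow> 's pmf" and T :: "'n::finite \<Rightarrow> 's set"
  assumes Av: "\<And>s. Av s \<noteq> {}" and v: "v \<in> bvi_L Smax Av \<delta> T j s"
  shows "\<exists>\<sigma>. is_strategy Av Smax \<sigma> \<and> (\<forall>\<tau>. is_strategy Av (-Smax) \<tau> \<longrightarrow>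
    (\<forall>i. v $ i \<le> reach_prob_upto Smax \<delta> \<sigma> \<tau> h s j (T i)))"
  using v
proof (induction j arbitrary: h s v)
  case 0
  then have "v = 0" by (simp add: bvi_L_def)
  then show ?case using reach_prob_upto_nonneg
    by (intro exI[of _ "pure_strat (some_action Av)"]) (auto simp: some_action_mem Av)
next
  case (Suc j)
  let ?L = "bvi_L Smax Av \<delta> T j"
  have L: "convex_lower_set (?L t)" for t by (rule convex_lower_set_bvi_L[OF Av])
  have "v \<in> bellman Smax Av \<delta> T ?L s" using Suc.prems by (simp add: bvi_L_def)
  then obtain p W where p: "set_pmf p \<subseteq> Av s" and W: "\<And>a t. W a t \<in> ?L t"
    and le: "\<And>q i. set_pmf q \<subseteq> Av s \<Longrightarrow> s \<notin> T i
      \<Longrightarrow> v $ i \<le> (\<Sum>a\<in>UNIV. pmf (if s \<in> Smax then p else q) a * pmf_mean (\<delta> s a) (W a) $ i)"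
    by (rule bellman_le_mean[where Av = Av and L = ?L, OF L Av]) blast
  have "\<forall>a t. \<exists>\<sigma>. is_strategy Av Smax \<sigma> \<and> (\<forall>\<tau>. is_strategy Av (-Smax) \<tau> \<longrightarrow>
      (\<forall>i. W a t $ i \<le> reach_prob_upto Smax \<delta> \<sigma> \<tau> (h @ [(s, a)]) t j (T i)))"
    using Suc.IH[OF W] by blast
  then obtain F where F: "\<And>a t. is_strategy Av Smax (F a t)"
    and FW: "\<And>a t \<tau> i. is_strategy Av (-Smax) \<tau> \<Longrightarrow>
      W a t $ i \<le> reach_prob_upto Smax \<delta> (F a t) \<tau> (h @ [(s, a)]) t j (T i)"
    by metis
  define \<sigma> where "\<sigma> = graft h s p F (pure_strat (some_action Av))"
  have "is_strategy Av Smax \<sigma>"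
    unfolding \<sigma>_def using F p by (intro is_strategy_graft) (auto simp: some_action_mem Av)
  moreover have "v $ i \<le> reach_prob_upto Smax \<delta> \<sigma> \<tau> h s (Suc j) (T i)"
    if \<tau>: "is_strategy Av (-Smax) \<tau>" for \<tau> i
  proof (cases "s \<in> T i")
    case True
    have "v \<in> {0..1}" using Suc.prems convex_lower_set_bvi_L[of Av, OF Av] unfolding convex_lower_set_def by blast
    then show ?thesis using True by (simp add: less_eq_vec_def)
  next
    case False
    let ?q = "act_pmf Smax \<sigma> \<tau> h s"
    have "set_pmf ?q \<subseteq> Av s" using p \<tau> by (auto simp: act_pmf_def \<sigma>_def is_strategy_def)
    moreover have "(if s \<in> Smax then p else ?q) = ?q" by (simp add: act_pmf_def \<sigma>_def)
    ultimately have "v $ i \<le> (\<Sum>a\<in>UNIV. pmf ?q a * (\<Sum>t\<in>UNIV. pmf (\<delta> s a) t * W a t $ i))"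
      using le[of ?q i] False by (simp add: pmf_mean_component)
    also have "\<dots> \<le> reach_prob_upto Smax \<delta> \<sigma> \<tau> h s (Suc j) (T i)"
      unfolding \<sigma>_def using False FW[OF \<tau>] by (rule reach_prob_upto_graft_ge)
    finally show ?thesis .
  qed
  ultimately show ?case by blast
qed

section \<open>Completeness of the lower bounds\<close>

definition min_reach_upto :: "'s set \<Rightarrow> ('s \<Rightarrow> 'a set) \<Rightarrow> ('s \<Rightarrow> 'a \<Rightarrow> 's pmf) \<Rightarrow> ('s, 'a) strat
    \<Rightarrow> ('s \<times> 'a) list \<Rightarrow> 's \<Rightarrow> nat \<Rightarrow> 's set \<Rightarrow> real" where
  "min_reach_upto Smax Av \<delta> \<sigma> h s k Tg = (INF \<pi> \<in> {\<pi>. is_strategy Av (-Smax) (pure_strat \<pi>)}.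
     reach_prob_upto Smax \<delta> \<sigma> (pure_strat \<pi>) h s k Tg)"

lemma min_reach_upto_le:
  "is_strategy Av (-Smax) (pure_strat \<pi>)
    \<Longrightarrow> min_reach_upto Smax Av \<delta> \<sigma> h s k Tg \<le> reach_prob_upto Smax \<delta> \<sigma> (pure_strat \<pi>) h s k Tg"
  unfolding min_reach_upto_def
  by (rule cINF_lower) (auto intro: bdd_belowI2[where m = 0] reach_prob_upto_nonneg)

lemma min_reach_upto_greatest:
  assumes "\<And>s. Av s \<noteq> {}"
    and "\<And>\<pi>. is_strategy Av (-Smax) (pure_strat \<pi>) \<Longrightarrow> x \<le> reach_prob_upto Smax \<delta> \<sigma> (pure_strat \<pi>) h s k Tg"
  shows "x \<le> min_reach_upto Smax Av \<delta> \<sigma> h s k Tg"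
  unfolding min_reach_upto_def
  by (rule cINF_greatest) (use assms in \<open>auto intro!: exI[of _ "some_action Av"] simp: some_action_mem\<close>)

lemma min_reach_upto_lessE:
  assumes "\<And>s. Av s \<noteq> {}" and "min_reach_upto Smax Av \<delta> \<sigma> h s k Tg < z"
  obtains \<pi> where "is_strategy Av (-Smax) (pure_strat \<pi>)" "reach_prob_upto Smax \<delta> \<sigma> (pure_strat \<pi>) h s k Tg < z"
proof -
  have "some_action Av \<in> {\<pi>. is_strategy Av (-Smax) (pure_strat \<pi>)}" by (simp add: assms(1) some_action_mem)
  then have "\<exists>x\<in>(\<lambda>\<pi>. reach_prob_upto Smax \<delta> \<sigma> (pure_strat \<pi>) h s k Tg) ` {\<pi>. is_strategy Av (-Smax) (pure_strat \<pi>)}.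
      x < z"
    using assms(2) unfolding min_reach_upto_def by (intro cInf_lessD) auto
  then show ?thesis using that by blast
qed

lemma min_reach_upto_nonneg:
  "(\<And>s. Av s \<noteq> {}) \<Longrightarrow> 0 \<le> min_reach_upto Smax Av \<delta> \<sigma> h s k Tg"
  by (rule min_reach_upto_greatest) (auto intro: reach_prob_upto_nonneg)

lemma min_reach_upto_le_1:
  fixes \<delta> :: "'s \<Rightarrow> 'a::finite \<Rightarrow> 's::finite pmf"
  shows "(\<And>s. Av s \<noteq> {}) \<Longrightarrow> min_reach_upto Smax Av \<delta> \<sigma> h s k Tg \<le> 1"
  using min_reach_upto_le[of Av Smax "some_action Av"] reach_prob_upto_le_1
  by (fastforce simp: some_action_mem intro: order_trans)

lemma min_reach_upto_mono:
  assumes "\<And>s. Av s \<noteq> {}" "k \<le> m"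
  shows "min_reach_upto Smax Av \<delta> \<sigma> h s k Tg \<le> min_reach_upto Smax Av \<delta> \<sigma> h s m Tg"
  using assms(1)
  by (rule min_reach_upto_greatest)
    (metis min_reach_upto_le reach_prob_upto_mono[OF assms(2)] order_trans)

text \<open>Gluing \<open>\<epsilon>\<close>-optimal pure replies after each first move shows that the Minimizer's optimal
  (k + 1)-step value is at most that of any fixed first move b followed by optimal k-step play.\<close>
lemma min_reach_upto_Suc_le_move:
  fixes \<delta> :: "'s \<Rightarrow> 'a::finite \<Rightarrow> 's::finite pmf"
  assumes Av: "\<And>s. Av s \<noteq> {}" and s: "s \<notin> Tg" and b: "s \<notin> Smax \<Longrightarrow> b \<in> Av s"
  shows "min_reach_upto Smax Av \<delta> \<sigma> h s (Suc k) Tg \<le> (\<Sum>a\<in>UNIV. pmf (if s \<in> Smax then \<sigma> h s else return_pmf b) a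
    * (\<Sum>t\<in>UNIV. pmf (\<delta> s a) t * min_reach_upto Smax Av \<delta> \<sigma> (h @ [(s, a)]) t k Tg))"
    (is "_ \<le> ?rhs")
proof (rule field_le_epsilon)
  fix e :: real assume e: "0 < e"
  let ?m = "\<lambda>a t. min_reach_upto Smax Av \<delta> \<sigma> (h @ [(s, a)]) t k Tg"
  let ?p = "if s \<in> Smax then \<sigma> h s else return_pmf b"
  have "\<exists>\<pi>. is_strategy Av (-Smax) (pure_strat \<pi>)
      \<and> reach_prob_upto Smax \<delta> \<sigma> (pure_strat \<pi>) (h @ [(s, a)]) t k Tg < ?m a t + e" for a t
  proof -
    have "?m a t < ?m a t + e" using e by simp
    then obtain \<pi> where "is_strategy Av (-Smax) (pure_strat \<pi>)"
      "reach_prob_upto Smax \<delta> \<sigma> (pure_strat \<pi>) (h @ [(s, a)]) t k Tg < ?m a t + e"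
      by (rule min_reach_upto_lessE[where Av = Av, OF Av])
    then show ?thesis by blast
  qed
  then obtain P where P: "\<And>a t. is_strategy Av (-Smax) (pure_strat (P a t))"
    and P_less: "\<And>a t. reach_prob_upto Smax \<delta> \<sigma> (pure_strat (P a t)) (h @ [(s, a)]) t k Tg < ?m a t + e"
    by metis
  define \<pi> where "\<pi> = graft h s b P (some_action Av)"
  have "is_strategy Av (-Smax) (pure_strat \<pi>)"
    unfolding \<pi>_def pure_strat_graft using P b by (intro is_strategy_graft) (auto simp: Av some_action_mem)
  then have "min_reach_upto Smax Av \<delta> \<sigma> h s (Suc k) Tg \<le> reach_prob_upto Smax \<delta> \<sigma> (pure_strat \<pi>) h s (Suc k) Tg"
    by (rule min_reach_upto_le)
  also have "\<dots> = (\<Sum>a\<in>UNIV. pmf ?p a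
      * (\<Sum>t\<in>UNIV. pmf (\<delta> s a) t * reach_prob_upto Smax \<delta> \<sigma> (pure_strat (P a t)) (h @ [(s, a)]) t k Tg))"
    using s by (simp add: \<pi>_def pure_strat_graft reach_prob_upto_graft_min act_pmf_def)
  also have "\<dots> \<le> (\<Sum>a\<in>UNIV. pmf ?p a * (\<Sum>t\<in>UNIV. pmf (\<delta> s a) t * (?m a t + e)))"
    using P_less by (intro sum_mono mult_left_mono) (auto intro: less_imp_le)
  also have "\<dots> = ?rhs + e"
    by (simp add: distrib_left sum.distrib sum_pmf_eq_1 flip: sum_distrib_right)
  finally show "min_reach_upto Smax Av \<delta> \<sigma> h s (Suc k) Tg \<le> ?rhs + e" .
qed

lemma min_reach_upto_Suc_le:
  fixes \<delta> :: "'s \<Rightarrow> 'a::finite \<Rightarrow> 's::finite pmf"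
  assumes Av: "\<And>s. Av s \<noteq> {}" and s: "s \<notin> Tg" and q: "set_pmf q \<subseteq> Av s"
  shows "min_reach_upto Smax Av \<delta> \<sigma> h s (Suc k) Tg \<le> (\<Sum>a\<in>UNIV. pmf (if s \<in> Smax then \<sigma> h s else q) a
    * (\<Sum>t\<in>UNIV. pmf (\<delta> s a) t * min_reach_upto Smax Av \<delta> \<sigma> (h @ [(s, a)]) t k Tg))"
proof (cases "s \<in> Smax")
  case True
  then show ?thesis using min_reach_upto_Suc_le_move[OF Av s, of Smax undefined] by simp
next
  case False
  let ?m = "min_reach_upto Smax Av \<delta> \<sigma> h s (Suc k) Tg"
  let ?X = "\<lambda>a. \<Sum>t\<in>UNIV. pmf (\<delta> s a) t * min_reach_upto Smax Av \<delta> \<sigma> (h @ [(s, a)]) t k Tg"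
  have move: "?m \<le> ?X b" if "b \<in> Av s" for b
    using min_reach_upto_Suc_le_move[OF Av s, of Smax b] that False by simp
  have "pmf q a * ?m \<le> pmf q a * ?X a" for a
  proof (cases "a \<in> Av s")
    case True
    then show ?thesis using move by (intro mult_left_mono) auto
  next
    case False
    then show ?thesis using pmf_eq_0_outside[OF q] by simp
  qed
  then have "(\<Sum>a\<in>UNIV. pmf q a * ?m) \<le> (\<Sum>a\<in>UNIV. pmf q a * ?X a)" by (rule sum_mono)
  then show ?thesis using False by (simp add: sum_pmf_eq_1 flip: sum_distrib_right)
qed

lemma min_reach_upto_0_mem_bvi_L:
  fixes \<delta> :: "'s::finite \<Rightarrow> 'a::finite \<Rightarrow> 's pmf" and T :: "'n::finite \<Rightarrow> 's set"
  assumes Av: "\<And>s. Av s \<noteq> {}" and \<sigma>: "is_strategy Av Smax \<sigma>"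
    and y0: "0 \<le> y" and y: "\<And>i. y $ i \<le> min_reach_upto Smax Av \<delta> \<sigma> h s 0 (T i)"
  shows "y \<in> bvi_L Smax Av \<delta> T 1 s"
proof -
  have yi: "y $ i \<le> (if s \<in> T i then 1 else 0)" for i
    using y[of i] min_reach_upto_le[of Av Smax "some_action Av" \<delta> \<sigma> h s 0 "T i"]
    by (simp add: Av some_action_mem)
  have "y $ i \<le> 1" for i using yi[of i] by (simp split: if_splits)
  then have y01: "y \<in> {0..1}" using y0 by (simp add: less_eq_vec_def)
  have "y \<in> bellman Smax Av \<delta> T (bvi_L Smax Av \<delta> T 0) s"
  proof (rule mem_bellman_if_le_mean[where W = "\<lambda>_ _. 0"])
    show "convex_lower_set (bvi_L Smax Av \<delta> T 0 t)" for t by (rule convex_lower_set_bvi_L[OF Av])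
    show "0 \<in> bvi_L Smax Av \<delta> T 0 t" for a :: 'a and t by (simp add: bvi_L_def)
    show "Av s \<noteq> {}" "y \<in> {0..1}" by (fact Av y01)+
    show "set_pmf (\<sigma> h s) \<subseteq> Av s" if "s \<in> Smax" using \<sigma> that by (auto simp: is_strategy_def)
    fix q i assume "s \<notin> T i"
    then show "y $ i \<le> (\<Sum>a\<in>UNIV. pmf (if s \<in> Smax then \<sigma> h s else q) a * pmf_mean (\<delta> s a) (\<lambda>_. 0) $ i)"
      using yi[of i] by (simp add: pmf_mean_def)
  qed
  then show ?thesis by (simp add: bvi_L_def)
qed

text \<open>The optimal k-step values of the Minimizer against \<sigma> satisfy the Bellman inequalities,
  so every vector below them lies in the (k + 1)-st lower bound.\<close>
lemma min_reach_upto_mem_bvi_L: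
  fixes \<delta> :: "'s::finite \<Rightarrow> 'a::finite \<Rightarrow> 's pmf" and T :: "'n::finite \<Rightarrow> 's set"
  assumes Av: "\<And>s. Av s \<noteq> {}" and \<sigma>: "is_strategy Av Smax \<sigma>"
    and "0 \<le> y" and "\<And>i. y $ i \<le> min_reach_upto Smax Av \<delta> \<sigma> h s k (T i)"
  shows "y \<in> bvi_L Smax Av \<delta> T (Suc k) s"
  using assms(3,4)
proof (induction k arbitrary: h s y)
  case 0
  then show ?case using min_reach_upto_0_mem_bvi_L[OF Av \<sigma> "0.prems"(1) "0.prems"(2)] by simp
next
  case (Suc k)
  let ?L = "bvi_L Smax Av \<delta> T (Suc k)"
  define W where "W a t = (\<chi> i. min_reach_upto Smax Av \<delta> \<sigma> (h @ [(s, a)]) t k (T i))" for a t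
  have W: "W a t \<in> ?L t" for a t
    by (rule Suc.IH[where h = "h @ [(s, a)]"]) (simp_all add: W_def less_eq_vec_def min_reach_upto_nonneg Av)
  have "y $ i \<le> 1" for i
    using Suc.prems(2)[of i] min_reach_upto_le_1[OF Av] by (rule order_trans)
  then have y: "y \<in> {0..1}" using Suc.prems(1) by (simp add: less_eq_vec_def)
  have "y \<in> bellman Smax Av \<delta> T ?L s"
  proof (rule mem_bellman_if_le_mean[where W = W])
    show "convex_lower_set (?L t)" for t by (rule convex_lower_set_bvi_L[OF Av])
    show "W a t \<in> ?L t" for a t by (rule W)
    show "Av s \<noteq> {}" "y \<in> {0..1}" by (fact Av y)+
    show "set_pmf (\<sigma> h s) \<subseteq> Av s" if "s \<in> Smax" using \<sigma> that by (auto simp: is_strategy_def)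
    fix q i assume q: "set_pmf q \<subseteq> Av s" and i: "s \<notin> T i"
    have W_mean: "pmf_mean (\<delta> s a) (W a) $ i
        = (\<Sum>t\<in>UNIV. pmf (\<delta> s a) t * min_reach_upto Smax Av \<delta> \<sigma> (h @ [(s, a)]) t k (T i))" for a
      by (simp add: W_def pmf_mean_component)
    show "y $ i \<le> (\<Sum>a\<in>UNIV. pmf (if s \<in> Smax then \<sigma> h s else q) a * pmf_mean (\<delta> s a) (W a) $ i)"
      unfolding W_mean using Suc.prems(2)[of i] min_reach_upto_Suc_le[where Av = Av, OF Av i q]
      by (rule order_trans)
  qed
  then show ?case by (simp add: bvi_L_def)
qed

definition restrict_upto :: "nat \<Rightarrow> (('s \<times> 'a) list \<Rightarrow> 's \<Rightarrow> 'a) \<Rightarrow> ('s \<times> 'a) list \<times> 's \<Rightarrow> 'a" where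
  "restrict_upto k \<pi> = restrict (\<lambda>(r, t). \<pi> r t) {(r, t). length r \<le> k}"

lemma finite_range_restrict_upto:
  "finite (range (restrict_upto k :: (('s::finite \<times> 'a::finite) list \<Rightarrow> 's \<Rightarrow> 'a) \<Rightarrow> _))"
proof -
  let ?D = "{(r, t). length r \<le> k} :: (('s \<times> 'a) list \<times> 's) set"
  have "?D = {r. set r \<subseteq> UNIV \<and> length r \<le> k} \<times> UNIV" by auto
  then have "finite ?D" using finite_lists_length_le[of "UNIV :: ('s \<times> 'a) set" k] by simp
  then have "finite (PiE ?D (\<lambda>_. UNIV :: 'a set))" by (intro finite_PiE) auto
  moreover have "range (restrict_upto k) \<subseteq> PiE ?D (\<lambda>_. UNIV)"
    unfolding restrict_upto_def by (intro image_subsetI) (simp add: restrict_PiE_iff)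
  ultimately show ?thesis by (rule finite_subset[rotated])
qed

lemma infinite_constant_subset:
  assumes "infinite B" "finite (f ` B)"
  shows "\<exists>B'\<subseteq>B. infinite B' \<and> (\<forall>m\<in>B'. \<forall>m'\<in>B'. f m = f m')"
proof -
  obtain m0 where "m0 \<in> B" "infinite {m\<in>B. f m = f m0}"
    using pigeonhole_infinite[OF assms] by blast
  then show ?thesis by (intro exI[of _ "{m\<in>B. f m = f m0}"]) auto
qed

lemma nested_agreement_sets:
  fixes \<pi>s :: "nat \<Rightarrow> ('s::finite \<times> 'a::finite) list \<Rightarrow> 's \<Rightarrow> 'a"
  obtains S where "\<And>k. infinite (S k)" "\<And>j k. j \<le> k \<Longrightarrow> S k \<subseteq> S j"
    "\<And>k m m'. m \<in> S k \<Longrightarrow> m' \<in> S k \<Longrightarrow> restrict_upto k (\<pi>s m) = restrict_upto k (\<pi>s m')"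
proof -
  let ?P = "\<lambda>k B. infinite B \<and> (\<forall>m\<in>B. \<forall>m'\<in>B. restrict_upto k (\<pi>s m) = restrict_upto k (\<pi>s m'))"
  have fin: "finite ((\<lambda>m. restrict_upto k (\<pi>s m)) ` B)" for k B
    by (rule finite_subset[OF _ finite_range_restrict_upto[of k]]) (intro image_subsetI rangeI)
  have "\<exists>S. \<forall>k. ?P k (S k) \<and> S (Suc k) \<subseteq> S k"
  proof (rule dependent_nat_choice)
    have "\<exists>B'\<subseteq>UNIV. infinite B' \<and> (\<forall>m\<in>B'. \<forall>m'\<in>B'. restrict_upto 0 (\<pi>s m) = restrict_upto 0 (\<pi>s m'))"
      by (rule infinite_constant_subset[OF infinite_UNIV_nat fin])
    then show "\<exists>B. ?P 0 B" by (elim exE conjE) (intro exI conjI)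
  next
    fix k B assume "?P k B"
    then have "\<exists>B'\<subseteq>B. infinite B'
        \<and> (\<forall>m\<in>B'. \<forall>m'\<in>B'. restrict_upto (Suc k) (\<pi>s m) = restrict_upto (Suc k) (\<pi>s m'))"
      by (intro infinite_constant_subset fin) (elim conjE)
    then show "\<exists>B'. ?P (Suc k) B' \<and> B' \<subseteq> B" by (elim exE conjE) (intro exI conjI)
  qed
  then obtain S where S: "\<And>k. ?P k (S k)" and dec: "\<And>k. S (Suc k) \<subseteq> S k" by metis
  show ?thesis
  proof (rule that)
    show "S k \<subseteq> S j" if "j \<le> k" for j k using dec that by (rule lift_Suc_antimono_le)
  qed (use S in blast)+
qed

text \<open>Koenig's lemma: every sequence of pure strategies has a cluster point for the topology of
  agreement on histories of bounded length.\<close>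
lemma pure_strategy_seq_cluster:
  fixes \<pi>s :: "nat \<Rightarrow> ('s::finite \<times> 'a::finite) list \<Rightarrow> 's \<Rightarrow> 'a"
  assumes valid: "\<And>m. is_strategy Av P (pure_strat (\<pi>s m))"
  obtains \<pi> where "is_strategy Av P (pure_strat \<pi>)"
    "\<And>k M. \<exists>m\<ge>M. \<forall>r t. length r \<le> k \<longrightarrow> \<pi>s m r t = \<pi> r t"
proof -
  obtain S where inf: "\<And>k. infinite (S k)" and mono: "\<And>j k. j \<le> k \<Longrightarrow> S k \<subseteq> S j"
    and agree: "\<And>k m m'. m \<in> S k \<Longrightarrow> m' \<in> S k \<Longrightarrow> restrict_upto k (\<pi>s m) = restrict_upto k (\<pi>s m')"
    by (rule nested_agreement_sets[of \<pi>s]) blast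
  define mm where "mm j = (SOME m. m \<in> S j)" for j
  have mm: "mm j \<in> S j" for j
    using inf[of j] unfolding mm_def by (simp add: some_in_eq infinite_imp_nonempty)
  define \<pi> where "\<pi> r t = \<pi>s (mm (length r)) r t" for r t
  have "\<exists>m\<ge>M. \<forall>r t. length r \<le> k \<longrightarrow> \<pi>s m r t = \<pi> r t" for k M
  proof -
    obtain m where m: "m \<ge> M" "m \<in> S k"
      using inf[of k] unfolding infinite_nat_iff_unbounded_le by blast
    have "\<pi>s m r t = \<pi> r t" if "length r \<le> k" for r t
    proof -
      have "restrict_upto (length r) (\<pi>s m) = restrict_upto (length r) (\<pi>s (mm (length r)))"
        using mono[OF that] m(2) mm by (intro agree) blast+
      then have "restrict_upto (length r) (\<pi>s m) (r, t) = restrict_upto (length r) (\<pi>s (mm (length r))) (r, t)"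
        by simp
      then show ?thesis by (simp add: restrict_upto_def \<pi>_def)
    qed
    then show ?thesis using m(1) by blast
  qed
  moreover have "is_strategy Av P (pure_strat \<pi>)" using valid by (simp add: \<pi>_def)
  ultimately show ?thesis using that by blast
qed

lemma horizon_below_achieved:
  fixes \<delta> :: "'s \<Rightarrow> 'a::finite \<Rightarrow> 's::finite pmf"
  assumes Av: "\<And>s. Av s \<noteq> {}"
    and x: "\<And>\<pi>. is_strategy Av (-Smax) (pure_strat \<pi>) \<Longrightarrow> x \<le> reach_prob Smax \<delta> \<sigma> (pure_strat \<pi>) s Tg"
    and "y < x"
  shows "\<exists>k. y \<le> min_reach_upto Smax Av \<delta> \<sigma> [] s k Tg"
proof (rule ccontr)
  assume "\<nexists>k. y \<le> min_reach_upto Smax Av \<delta> \<sigma> [] s k Tg"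
  then have "min_reach_upto Smax Av \<delta> \<sigma> [] s k Tg < y" for k by (auto simp: not_le)
  then have "\<exists>\<pi>. is_strategy Av (-Smax) (pure_strat \<pi>) \<and> reach_prob_upto Smax \<delta> \<sigma> (pure_strat \<pi>) [] s k Tg < y" for k
    by (rule min_reach_upto_lessE[where Av = Av, OF Av]) blast
  then obtain \<pi>s where \<pi>s: "\<And>k. is_strategy Av (-Smax) (pure_strat (\<pi>s k))"
    and less: "\<And>k. reach_prob_upto Smax \<delta> \<sigma> (pure_strat (\<pi>s k)) [] s k Tg < y"
    by metis
  obtain \<pi> where \<pi>: "is_strategy Av (-Smax) (pure_strat \<pi>)"
    and agree: "\<And>k M. \<exists>m\<ge>M. \<forall>r t. length r \<le> k \<longrightarrow> \<pi>s m r t = \<pi> r t"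
    by (rule pure_strategy_seq_cluster[of Av "-Smax" \<pi>s, OF \<pi>s]) blast
  have "reach_prob_upto Smax \<delta> \<sigma> (pure_strat \<pi>) [] s k Tg \<le> y" for k
  proof -
    obtain m where m: "k \<le> m" "\<And>r t. length r \<le> k \<Longrightarrow> \<pi>s m r t = \<pi> r t" using agree by blast
    have "reach_prob_upto Smax \<delta> \<sigma> (pure_strat \<pi>) [] s k Tg
        = reach_prob_upto Smax \<delta> \<sigma> (pure_strat (\<pi>s m)) [] s k Tg"
      by (rule reach_prob_upto_cong) (simp add: act_pmf_def pure_strat_def m(2))
    also have "\<dots> \<le> reach_prob_upto Smax \<delta> \<sigma> (pure_strat (\<pi>s m)) [] s m Tg"
      using m(1) by (rule reach_prob_upto_mono)
    finally show ?thesis using less[of m] by simp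
  qed
  then have "reach_prob Smax \<delta> \<sigma> (pure_strat \<pi>) s Tg \<le> y"
    by (intro LIMSEQ_le_const2[OF reach_prob_upto_tendsto]) auto
  then show False using x[OF \<pi>] \<open>y < x\<close> by simp
qed

lemma L_inf_subset_achievable:
  fixes \<delta> :: "'s::finite \<Rightarrow> 'a::finite \<Rightarrow> 's pmf" and T :: "'n::finite \<Rightarrow> 's set"
  assumes Av: "\<And>s. Av s \<noteq> {}"
  shows "L_inf Smax Av \<delta> T s \<subseteq> achievable Smax Av \<delta> T s"
proof
  fix v assume "v \<in> L_inf Smax Av \<delta> T s"
  then obtain j where v: "v \<in> bvi_L Smax Av \<delta> T j s" by (auto simp: L_inf_def)
  then obtain \<sigma> where \<sigma>: "is_strategy Av Smax \<sigma>"
    and guar: "\<forall>\<tau>. is_strategy Av (-Smax) \<tau> \<longrightarrow> (\<forall>i. v $ i \<le> reach_prob_upto Smax \<delta> \<sigma> \<tau> [] s j (T i))"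
    using bvi_L_guaranteed[where Av = Av and h = "[]", OF Av] by blast
  have "v \<in> {0..1}" using v convex_lower_set_bvi_L[of Av, OF Av] unfolding convex_lower_set_def by blast
  then have "0 \<le> v" by simp
  moreover have "v $ i \<le> reach_prob Smax \<delta> \<sigma> \<tau> s (T i)" if "is_strategy Av (-Smax) \<tau>" for \<tau> i
    using guar that reach_prob_upto_le_reach_prob order_trans by blast
  ultimately show "v \<in> achievable Smax Av \<delta> T s"
    unfolding achievable_def using \<sigma> by (auto simp: less_eq_vec_def)
qed

lemma achievable_subset_unit_interval:
  fixes \<delta> :: "'s::finite \<Rightarrow> 'a::finite \<Rightarrow> 's pmf" and T :: "'n::finite \<Rightarrow> 's set"
  assumes Av: "\<And>s. Av s \<noteq> {}"
  shows "achievable Smax Av \<delta> T s \<subseteq> {0..1}"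
proof
  fix x assume "x \<in> achievable Smax Av \<delta> T s"
  then obtain \<sigma> where x0: "\<forall>i. 0 \<le> x $ i"
    and x: "\<And>\<tau> i. is_strategy Av (-Smax) \<tau> \<Longrightarrow> x $ i \<le> reach_prob Smax \<delta> \<sigma> \<tau> s (T i)"
    unfolding achievable_def by blast
  have "x $ i \<le> reach_prob Smax \<delta> \<sigma> (pure_strat (some_action Av)) s (T i)" for i
    by (rule x) (simp add: Av some_action_mem)
  then have "x $ i \<le> 1" for i using reach_prob_le_1 order_trans by blast
  then show "x \<in> {0..1}" using x0 by (simp add: less_eq_vec_def)
qed

lemma scaled_achievable_mem_L_inf:
  fixes \<delta> :: "'s::finite \<Rightarrow> 'a::finite \<Rightarrow> 's pmf" and T :: "'n::finite \<Rightarrow> 's set"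
  assumes Av: "\<And>s. Av s \<noteq> {}" and x: "x \<in> achievable Smax Av \<delta> T s" and c: "0 \<le> c" "c < 1"
  shows "c *\<^sub>R x \<in> L_inf Smax Av \<delta> T s"
proof -
  obtain \<sigma> where \<sigma>: "is_strategy Av Smax \<sigma>" and x0: "\<forall>i. 0 \<le> x $ i"
    and ach: "\<And>\<tau> i. is_strategy Av (-Smax) \<tau> \<Longrightarrow> x $ i \<le> reach_prob Smax \<delta> \<sigma> \<tau> s (T i)"
    using x unfolding achievable_def by blast
  have "\<forall>i. \<exists>k. c * x $ i \<le> min_reach_upto Smax Av \<delta> \<sigma> [] s k (T i)"
  proof
    fix i
    show "\<exists>k. c * x $ i \<le> min_reach_upto Smax Av \<delta> \<sigma> [] s k (T i)"
    proof (cases "x $ i = 0")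
      case True
      then show ?thesis using min_reach_upto_nonneg[where Av = Av, OF Av] by simp
    next
      case False
      then have "c * x $ i < x $ i" using x0 c by (simp add: order_le_neq_trans)
      then show ?thesis using ach by (intro horizon_below_achieved[where Av = Av, OF Av]) simp_all
    qed
  qed
  from choice[OF this] obtain k where k: "\<forall>i. c * x $ i \<le> min_reach_upto Smax Av \<delta> \<sigma> [] s (k i) (T i)"
    by blast
  let ?K = "Max (range k)"
  have "c * x $ i \<le> min_reach_upto Smax Av \<delta> \<sigma> [] s ?K (T i)" for i
  proof -
    have "k i \<le> ?K" by (simp add: Max_ge)
    then show ?thesis using k[rule_format, of i] min_reach_upto_mono[where Av = Av and k = "k i" and m = ?K, OF Av]
      by (rule_tac order_trans)
  qed
  moreover have "0 \<le> c *\<^sub>R x" using x0 c by (simp add: less_eq_vec_def)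
  ultimately have "c *\<^sub>R x \<in> bvi_L Smax Av \<delta> T (Suc ?K) s"
    by (intro min_reach_upto_mem_bvi_L[where Av = Av, OF Av \<sigma>]) simp_all
  then show ?thesis by (auto simp: L_inf_def)
qed

lemma direction_scaleR:
  assumes "0 < c"
  shows "direction (c *\<^sub>R x) = direction x"
  unfolding direction_def
proof (intro equalityI subsetI; elim CollectE exE conjE)
  fix y c' assume "y = c' *\<^sub>R c *\<^sub>R x" "0 < c'"
  then show "y \<in> {c *\<^sub>R x |c. 0 < c}" using assms by (intro CollectI exI[of _ "c' * c"]) simp
next
  fix y c' assume "y = c' *\<^sub>R x" "0 < c'"
  then show "y \<in> {c' *\<^sub>R c *\<^sub>R x |c'. 0 < c'}" using assms by (intro CollectI exI[of _ "c' / c"]) simp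
qed

lemma along_eq_if_scaled_mem:
  fixes L A :: "(real^'n::finite) set"
  assumes LA: "L \<subseteq> A" and bounded: "bounded A"
    and scaled: "\<And>x c. x \<in> A \<Longrightarrow> 0 < c \<Longrightarrow> c < 1 \<Longrightarrow> c *\<^sub>R x \<in> L"
  shows "along L d = along A d"
proof -
  let ?N = "\<lambda>X. {norm x | x. x \<in> X \<and> direction x = d}"
  have bdd: "bdd_above (?N A)"
    using bounded unfolding bounded_iff by (auto intro: bdd_aboveI2)
  have NL_sub: "?N L \<subseteq> ?N A" using LA by blast
  show ?thesis
  proof (cases "?N A = {}")
    case True
    then have "?N L = {}" using NL_sub by blast
    then show ?thesis using True by (simp add: along_def)
  next
    case False
    then obtain x0 where "x0 \<in> A" "direction x0 = d" by blast
    then have "(1/2) *\<^sub>R x0 \<in> L" "direction ((1/2) *\<^sub>R x0) = d"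
      using scaled[of x0 "1/2"] direction_scaleR[of "1/2" x0] by simp_all
    then have ne: "?N L \<noteq> {}" by blast
    have bddL: "bdd_above (?N L)" using bdd NL_sub by (rule bdd_above_mono)
    have "Sup (?N L) \<le> Sup (?N A)" using ne bdd NL_sub by (rule cSup_subset_mono)
    moreover have "Sup (?N A) \<le> Sup (?N L)"
    proof (rule cSup_least[OF False])
      fix y assume "y \<in> ?N A"
      then obtain x where x: "x \<in> A" "direction x = d" "y = norm x" by blast
      show "y \<le> Sup (?N L)"
      proof (rule field_le_mult_one_interval)
        fix c :: real assume c: "0 < c" "c < 1"
        have "norm (c *\<^sub>R x) \<in> ?N L" using scaled[OF x(1) c] direction_scaleR[OF c(1)] x(2) by blast
        then show "c * y \<le> Sup (?N L)" using c x(3) bddL by (auto intro: cSup_upper)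
      qed
    qed
    ultimately show ?thesis
      unfolding along_def Let_def if_not_P[OF ne] if_not_P[OF False] by (rule antisym)
  qed
qed

theorem proposition5p2:
  fixes Smax :: "'s::finite set"
    and Av :: "'s \<Rightarrow> 'a::finite set"
    and \<delta> :: "'s \<Rightarrow> 'a \<Rightarrow> 's pmf"
    and T :: "'n::finite \<Rightarrow> 's set"
  assumes "\<And>s. Av s \<noteq> {}"
  shows "\<forall>s. \<forall>d\<in>Dirs. along (L_inf Smax Av \<delta> T s) d = along (achievable Smax Av \<delta> T s) d"
proof (intro allI ballI)
  fix s and d :: "(real^'n) set"
  have "achievable Smax Av \<delta> T s \<subseteq> cbox 0 1"
    using achievable_subset_unit_interval[where Av = Av, OF assms] by (simp add: interval_cbox_cart)
  then have "bounded (achievable Smax Av \<delta> T s)" by (rule bounded_subset[OF bounded_cbox])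
  show "along (L_inf Smax Av \<delta> T s) d = along (achievable Smax Av \<delta> T s) d"
  proof (rule along_eq_if_scaled_mem)
    show "L_inf Smax Av \<delta> T s \<subseteq> achievable Smax Av \<delta> T s"
      by (rule L_inf_subset_achievable) (fact assms)
    show "c *\<^sub>R x \<in> L_inf Smax Av \<delta> T s" if "x \<in> achievable Smax Av \<delta> T s" "0 < c" "c < 1" for x c
      using that by (intro scaled_achievable_mem_L_inf assms) simp_all
  qed fact
qed

end
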